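(* Let $U\colon[0,1]^2\to[0,1]$ be a uninorm with neutral element $e\in(0,1)$, $U\in\mathcal U$, and let $a<b$ be idempotent elements of $U$ such that there is no idempotent element of $U$ in $(a,b)$. If there exist $y\in[0,1]$ and $x_1,x_2\in(a,b)$ with $x_1<x_2$ such that $u_{x_1}$ and $u_{x_2}$ are both non-continuous at $y$, then $U$ is pseudo-internal on $[a,b]\times[0,1]$, i.e. $U(x,z)\in\{x,z\}$ for all $(x,z)\in [a,b]\times[0,1]$ with $(x,z)\in[0,e]\times[e,1]\cup[e,1]\times[0,e]$.
   Context: A uninorm is a commutative, associative binary operation on $[0,1]$, non-decreasing in each variable, with a neutral element $e$. Underlying t-norm $T_U(x,y)=U(ex,ey)/e$, underlying t-conorm $C_U(x,y)=(U(e+(1-e)x,e+(1-e)y)-e)/(1-e)$; $\mathcal U$ is the class of uninorms for which both are continuous. For $x\in[0,1]$, $u_x(z)=U(x,z)$. An idempotent element is $x$ with $U(x,x)=x$. $U$ is pseudo-internal (on a set) if it is internal, i.e. $U(x,z)\in\{x,z\}$, at all points of that set lying in $[0,e]\times[e,1]\cup[e,1]\times[0,e]$. *)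

theory Defs
  imports "HOL-Analysis.Analysis"
begin

text \<open>A uninorm on the unit interval with neutral element e. Only values on [0,1] matter.\<close>
definition uninorm :: "(real \<Rightarrow> real \<Rightarrow> real) \<Rightarrow> real \<Rightarrow> bool" where
  "uninorm U e \<longleftrightarrow> e \<in> {0..1} \<and>
     (\<forall>x\<in>{0..1}. \<forall>y\<in>{0..1}. U x y \<in> {0..1}) \<and>
     (\<forall>x\<in>{0..1}. \<forall>y\<in>{0..1}. U x y = U y x) \<and>
     (\<forall>x\<in>{0..1}. \<forall>y\<in>{0..1}. \<forall>z\<in>{0..1}. U (U x y) z = U x (U y z)) \<and>
     (\<forall>x\<in>{0..1}. \<forall>y\<in>{0..1}. \<forall>z\<in>{0..1}. y \<le> z \<longrightarrow> U x y \<le> U x z) \<and>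
     (\<forall>x\<in>{0..1}. U e x = x)"

definition underlying_tnorm :: "(real \<Rightarrow> real \<Rightarrow> real) \<Rightarrow> real \<Rightarrow> real \<Rightarrow> real \<Rightarrow> real" where
  "underlying_tnorm U e x y = U (e * x) (e * y) / e"

definition underlying_tconorm :: "(real \<Rightarrow> real \<Rightarrow> real) \<Rightarrow> real \<Rightarrow> real \<Rightarrow> real \<Rightarrow> real" where
  "underlying_tconorm U e x y = (U (e + (1 - e) * x) (e + (1 - e) * y) - e) / (1 - e)"

definition in_class_U :: "(real \<Rightarrow> real \<Rightarrow> real) \<Rightarrow> real \<Rightarrow> bool" where
  "in_class_U U e \<longleftrightarrow> uninorm U e \<and>
     continuous_on ({0..1} \<times> {0..1}) (\<lambda>(x, y). underlying_tnorm U e x y) \<and>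
     continuous_on ({0..1} \<times> {0..1}) (\<lambda>(x, y). underlying_tconorm U e x y)"

definition idempotent_elem :: "(real \<Rightarrow> real \<Rightarrow> real) \<Rightarrow> real \<Rightarrow> bool" where
  "idempotent_elem U x \<longleftrightarrow> x \<in> {0..1} \<and> U x x = x"

end

theory Submission
  imports Defs
begin

text \<open>By the duality x \<mapsto> 1 - x we may assume that the gap (a, b) between consecutive
  idempotents lies below e, where U is an Archimedean piece of the continuous underlying t-norm.
  For z \<ge> e, associativity and divisibility on [a, b] force x \<mapsto> U x z to be, on all of (a, b),
  either the identity, or the constant z, or strictly between x and z. A section u_x is monotone
  and, by continuity of the t-norm and t-conorm parts, attains every value in [0, v] for each of
  its values v \<le> e and every value in [v, 1] for each of its values v \<ge> e; so a
  discontinuity of u_x at y is a jump across e. Two sections u_x1, u_x2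
  jumping at the same y exclude the third alternative for every z \<ge> e, by a case analysis on
  whether y is idempotent and on the position of z relative to y. The first two alternatives
  are pseudo-internality.\<close>

lemma continuous_within_mono_on_semicontinuous:
  fixes f :: "real \<Rightarrow> real"
  assumes mono: "mono_on S f" and y0: "y0 \<in> S"
    and right: "\<And>\<epsilon>. \<epsilon> > 0 \<Longrightarrow> \<exists>\<delta>>0. \<forall>z\<in>S. y0 \<le> z \<and> z < y0 + \<delta> \<longrightarrow> f z < f y0 + \<epsilon>"
    and left: "\<And>\<epsilon>. \<epsilon> > 0 \<Longrightarrow> \<exists>\<delta>>0. \<forall>z\<in>S. y0 - \<delta> < z \<and> z \<le> y0 \<longrightarrow> f y0 - \<epsilon> < f z"
  shows "continuous (at y0 within S) f"
  unfolding continuous_within_eps_delta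
proof (intro allI impI)
  fix \<epsilon> :: real assume "\<epsilon> > 0"
  obtain d1 where d1: "d1 > 0" "\<forall>z\<in>S. y0 \<le> z \<and> z < y0 + d1 \<longrightarrow> f z < f y0 + \<epsilon>"
    using right[OF \<open>\<epsilon> > 0\<close>] by auto
  obtain d2 where d2: "d2 > 0" "\<forall>z\<in>S. y0 - d2 < z \<and> z \<le> y0 \<longrightarrow> f y0 - \<epsilon> < f z"
    using left[OF \<open>\<epsilon> > 0\<close>] by auto
  show "\<exists>\<delta>>0. \<forall>z\<in>S. dist z y0 < \<delta> \<longrightarrow> dist (f z) (f y0) < \<epsilon>"
  proof (intro exI[of _ "min d1 d2"] conjI ballI impI)
    fix z assume z: "z \<in> S" "dist z y0 < min d1 d2"
    show "dist (f z) (f y0) < \<epsilon>"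
    proof (cases "y0 \<le> z")
      case True
      then have "f y0 \<le> f z" using mono_onD[OF mono y0 z(1)] by simp
      moreover have "f z < f y0 + \<epsilon>" using d1 z True by (auto simp: dist_real_def)
      ultimately show ?thesis by (auto simp: dist_real_def)
    next
      case False
      then have "f z \<le> f y0" using mono_onD[OF mono z(1) y0] by simp
      moreover have "f y0 - \<epsilon> < f z" using d2 z False by (auto simp: dist_real_def)
      ultimately show ?thesis by (auto simp: dist_real_def)
    qed
  qed (use d1 d2 in auto)
qed

lemma continuous_within_Sup_range_const:
  fixes f s :: "nat \<Rightarrow> real" and g :: "real \<Rightarrow> real"
  assumes cont: "continuous (at (Sup (range s)) within S) g" and bdd: "bdd_above (range s)"
    and s: "\<And>n. s n \<in> S" and const: "\<And>n. g (s n) = c"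
  shows "g (Sup (range s)) = c"
proof (rule ccontr)
  let ?L = "Sup (range s)"
  assume "g ?L \<noteq> c"
  then obtain d where d: "d > 0" "\<forall>u\<in>S. dist u ?L < d \<longrightarrow> dist (g u) (g ?L) < dist c (g ?L)"
    using cont[unfolded continuous_within_eps_delta, rule_format, of "dist c (g ?L)"] by auto
  obtain n where "?L - d < s n" using less_cSup_iff[OF _ bdd, of "?L - d"] d(1) by auto
  moreover have "s n \<le> ?L" using cSup_upper[OF _ bdd] by auto
  ultimately have "dist (g (s n)) (g ?L) < dist c (g ?L)" using d s[of n] by (auto simp: dist_real_def)
  then show False using const[of n] by simp
qed

subsection \<open>Sections of uninorms in the class U\<close>

locale class_U =
  fixes U :: "real \<Rightarrow> real \<Rightarrow> real" and e :: real
  assumes cls: "in_class_U U e" and e0: "0 < e" and e1: "e < 1"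
begin

lemma is_uninorm: "uninorm U e"
  using cls by (simp add: in_class_U_def)

lemma U_in_unit: "0 \<le> x \<Longrightarrow> x \<le> 1 \<Longrightarrow> 0 \<le> z \<Longrightarrow> z \<le> 1 \<Longrightarrow> 0 \<le> U x z \<and> U x z \<le> 1"
  using is_uninorm by (auto simp: uninorm_def)

lemma U_commute: "0 \<le> x \<Longrightarrow> x \<le> 1 \<Longrightarrow> 0 \<le> z \<Longrightarrow> z \<le> 1 \<Longrightarrow> U x z = U z x"
  using is_uninorm by (auto simp: uninorm_def)

lemma U_assoc: "0 \<le> x \<Longrightarrow> x \<le> 1 \<Longrightarrow> 0 \<le> y \<Longrightarrow> y \<le> 1 \<Longrightarrow> 0 \<le> z \<Longrightarrow> z \<le> 1 \<Longrightarrow>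
   U (U x y) z = U x (U y z)"
  using is_uninorm unfolding uninorm_def by (auto)

lemma U_mono_right: "0 \<le> x \<Longrightarrow> x \<le> 1 \<Longrightarrow> 0 \<le> y \<Longrightarrow> y \<le> z \<Longrightarrow> z \<le> 1 \<Longrightarrow> U x y \<le> U x z"
  using is_uninorm unfolding uninorm_def by (auto)

lemma U_mono_left: "0 \<le> x \<Longrightarrow> x \<le> y \<Longrightarrow> y \<le> 1 \<Longrightarrow> 0 \<le> z \<Longrightarrow> z \<le> 1 \<Longrightarrow> U x z \<le> U y z"
  using U_mono_right[of z x y] U_commute by auto

lemma U_mono: "0 \<le> x \<Longrightarrow> x \<le> x' \<Longrightarrow> x' \<le> 1 \<Longrightarrow> 0 \<le> z \<Longrightarrow> z \<le> z' \<Longrightarrow> z' \<le> 1 \<Longrightarrow> U x z \<le> U x' z'"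
  by (meson U_mono_left U_mono_right order_trans)

lemma U_neutral_left: "0 \<le> x \<Longrightarrow> x \<le> 1 \<Longrightarrow> U e x = x"
proof -
  have "\<forall>x\<in>{0..1}. U e x = x" using is_uninorm unfolding uninorm_def by blast
  then show "0 \<le> x \<Longrightarrow> x \<le> 1 \<Longrightarrow> U e x = x" by auto
qed

lemma U_neutral_right: "0 \<le> x \<Longrightarrow> x \<le> 1 \<Longrightarrow> U x e = x"
  using U_commute[of x e] U_neutral_left[of x] e0 e1 by simp

lemma continuous_on_tnorm_square: "continuous_on ({0..e} \<times> {0..e}) (\<lambda>p. U (fst p) (snd p))"
proof -
  have c: "continuous_on ({0..1} \<times> {0..1}) (\<lambda>(x, y). underlying_tnorm U e x y)"
    using cls by (simp add: in_class_U_def)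
  have f: "continuous_on ({0..e} \<times> {0..e}) (\<lambda>p::real\<times>real. (fst p / e, snd p / e))"
    by (intro continuous_intros) (use e0 in auto)
  have im: "(\<lambda>p::real\<times>real. (fst p / e, snd p / e)) ` ({0..e} \<times> {0..e}) \<subseteq> {0..1} \<times> {0..1}"
    using e0 by auto
  have "continuous_on ({0..e} \<times> {0..e}) (\<lambda>p. e * (\<lambda>(x, y). underlying_tnorm U e x y) (fst p / e, snd p / e))"
    by (intro continuous_intros continuous_on_compose2[OF c f im])
  moreover have "\<And>p. p \<in> {0..e} \<times> {0..e} \<Longrightarrow> e * (\<lambda>(x, y). underlying_tnorm U e x y) (fst p / e, snd p / e) = U (fst p) (snd p)"
    using e0 by (auto simp: underlying_tnorm_def)
  ultimately show ?thesis using continuous_on_cong by (metis (no_types, lifting))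
qed

lemma continuous_on_tconorm_square: "continuous_on ({e..1} \<times> {e..1}) (\<lambda>p. U (fst p) (snd p))"
proof -
  have c: "continuous_on ({0..1} \<times> {0..1}) (\<lambda>(x, y). underlying_tconorm U e x y)"
    using cls by (simp add: in_class_U_def)
  have f: "continuous_on ({e..1} \<times> {e..1}) (\<lambda>p::real\<times>real. ((fst p - e) / (1 - e), (snd p - e)/ (1 - e)))"
    by (intro continuous_intros) (use e1 in auto)
  have im: "(\<lambda>p::real\<times>real. ((fst p - e) / (1 - e), (snd p - e)/ (1 - e))) ` ({e..1} \<times> {e..1}) \<subseteq> {0..1} \<times> {0..1}"
    using e1 by (auto simp: field_simps)
  have "continuous_on ({e..1} \<times> {e..1}) (\<lambda>p. e + (1 - e) * (\<lambda>(x, y). underlying_tconorm U e x y) ((fst p - e) / (1 - e), (snd p - e)/ (1 - e)))"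
    by (intro continuous_intros continuous_on_compose2[OF c f im])
  moreover have "\<And>p. p \<in> {e..1} \<times> {e..1} \<Longrightarrow> e + (1 - e) * (\<lambda>(x, y). underlying_tconorm U e x y) ((fst p - e) / (1 - e), (snd p - e)/ (1 - e)) = U (fst p) (snd p)"
    using e1 by (auto simp: underlying_tconorm_def)
  ultimately show ?thesis using continuous_on_cong by (metis (no_types, lifting))
qed

lemma continuous_on_tnorm_right: "0 \<le> w \<Longrightarrow> w \<le> e \<Longrightarrow> continuous_on {0..e} (U w)"
  by (rule continuous_on_compose2[OF continuous_on_tnorm_square, of _ "\<lambda>s. (w, s)", simplified]) (auto intro!: continuous_intros)

lemma continuous_on_tnorm_left: "0 \<le> w \<Longrightarrow> w \<le> e \<Longrightarrow> continuous_on {0..e} (\<lambda>x. U x w)"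
  by (rule continuous_on_compose2[OF continuous_on_tnorm_square, of _ "\<lambda>s. (s, w)", simplified]) (auto intro!: continuous_intros)

lemma continuous_on_tconorm_right: "e \<le> w \<Longrightarrow> w \<le> 1 \<Longrightarrow> continuous_on {e..1} (U w)"
  by (rule continuous_on_compose2[OF continuous_on_tconorm_square, of _ "\<lambda>s. (w, s)", simplified]) (auto intro!: continuous_intros)

lemma continuous_on_tconorm_left: "e \<le> w \<Longrightarrow> w \<le> 1 \<Longrightarrow> continuous_on {e..1} (\<lambda>x. U x w)"
  by (rule continuous_on_compose2[OF continuous_on_tconorm_square, of _ "\<lambda>s. (s, w)", simplified]) (auto intro!: continuous_intros)

lemma U_le_right: "0 \<le> u \<Longrightarrow> u \<le> e \<Longrightarrow> 0 \<le> v \<Longrightarrow> v \<le> 1 \<Longrightarrow> U u v \<le> v"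
  using U_mono_left[of u e v] U_neutral_left[of v] e0 e1 by auto

lemma U_ge_right: "e \<le> u \<Longrightarrow> u \<le> 1 \<Longrightarrow> 0 \<le> v \<Longrightarrow> v \<le> 1 \<Longrightarrow> v \<le> U u v"
  using U_mono_left[of e u v] U_neutral_left[of v] e0 e1 by auto

lemma U_le_left: "0 \<le> u \<Longrightarrow> u \<le> e \<Longrightarrow> 0 \<le> v \<Longrightarrow> v \<le> 1 \<Longrightarrow> U v u \<le> v"
  using U_le_right U_commute e1 by auto

lemma U_ge_left: "e \<le> u \<Longrightarrow> u \<le> 1 \<Longrightarrow> 0 \<le> v \<Longrightarrow> v \<le> 1 \<Longrightarrow> v \<le> U v u"
  using U_ge_right U_commute e0 by auto

lemma U_zero: "0 \<le> w \<Longrightarrow> w \<le> e \<Longrightarrow> U w 0 = 0"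
  using U_le_right[of w 0] U_in_unit[of w 0] e1 by auto

lemma U_one: "e \<le> w \<Longrightarrow> w \<le> 1 \<Longrightarrow> U w 1 = 1"
  using U_ge_right[of w 1] U_in_unit[of w 1] e0 by auto

lemma tnorm_section_onto:
  assumes "0 \<le> w" "w \<le> e" "0 \<le> v" "v \<le> w"
  shows "\<exists>s. 0 \<le> s \<and> s \<le> e \<and> U w s = v"
proof -
  have "\<exists>s. 0 \<le> s \<and> s \<le> e \<and> U w s = v"
    by (rule IVT') (use assms U_zero U_neutral_right e0 e1 continuous_on_tnorm_right in auto)
  then show ?thesis .
qed

lemma tconorm_section_onto:
  assumes "e \<le> w" "w \<le> 1" "w \<le> v" "v \<le> 1"
  shows "\<exists>s. e \<le> s \<and> s \<le> 1 \<and> U w s = v"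
proof -
  have "\<exists>s. e \<le> s \<and> s \<le> 1 \<and> U w s = v"
    by (rule IVT') (use assms U_one U_neutral_right e0 e1 continuous_on_tconorm_right in auto)
  then show ?thesis .
qed

lemma section_attains_below:
  assumes "0 \<le> x" "x \<le> 1" "0 \<le> z" "z \<le> 1" "U x z \<le> e" "0 \<le> v" "v \<le> U x z"
  shows "\<exists>z'. 0 \<le> z' \<and> z' \<le> 1 \<and> U x z' = v"
proof -
  have r: "0 \<le> U x z" "U x z \<le> 1" using U_in_unit assms by auto
  obtain s where s: "0 \<le> s" "s \<le> e" "U (U x z) s = v" using tnorm_section_onto[OF r(1) assms(5) assms(6,7)] by auto
  have "U x (U z s) = v" using U_assoc[of x z s] s assms e1 by auto
  then show ?thesis using U_in_unit[of z s] s assms e1 by (intro exI[of _ "U z s"]) auto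
qed

lemma section_attains_above:
  assumes "0 \<le> x" "x \<le> 1" "0 \<le> z" "z \<le> 1" "e \<le> U x z" "U x z \<le> v" "v \<le> 1"
  shows "\<exists>z'. 0 \<le> z' \<and> z' \<le> 1 \<and> U x z' = v"
proof -
  have r: "0 \<le> U x z" "U x z \<le> 1" using U_in_unit assms by auto
  obtain s where s: "e \<le> s" "s \<le> 1" "U (U x z) s = v" using tconorm_section_onto[OF assms(5) r(2) assms(6,7)] by auto
  have "U x (U z s) = v" using U_assoc[of x z s] s assms e0 by auto
  then show ?thesis using U_in_unit[of z s] s assms e0 by (intro exI[of _ "U z s"]) auto
qed

text \<open>A monotone section can only jump over values it misses, and by section_attains_below
  and section_attains_above it misses no value beyond one of its values on the same side of e.\<close>
lemma right_upper_of_ge_e: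
  assumes x: "0 \<le> x" "x \<le> 1" and y: "0 \<le> y0" "y0 \<le> 1" and ge: "e \<le> U x y0" and ep: "\<epsilon> > 0"
  shows "\<exists>\<delta>>0. \<forall>z\<in>{0..1}. y0 \<le> z \<and> z < y0 + \<delta> \<longrightarrow> U x z < U x y0 + \<epsilon>"
proof (cases "U x y0 + \<epsilon>/2 \<le> 1")
  case True
  obtain zr where zr: "0 \<le> zr" "zr \<le> 1" "U x zr = U x y0 + \<epsilon>/2"
    using section_attains_above[OF x y ge _ True] ep by auto
  have "y0 < zr"
  proof (rule ccontr)
    assume "\<not> y0 < zr" then have "U x zr \<le> U x y0" using U_mono_right[of x zr y0] x y zr by auto
    then show False using zr ep by auto
  qed
  then show ?thesis
  proof (intro exI[of _ "zr - y0"] conjI ballI impI)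
    fix z assume "z \<in> {0..1}" "y0 \<le> z \<and> z < y0 + (zr - y0)"
    then have "U x z \<le> U x zr" using U_mono_right[of x z zr] x zr by auto
    then show "U x z < U x y0 + \<epsilon>" using zr ep by auto
  qed auto
next
  case False
  show ?thesis
  proof (intro exI[of _ 1] conjI ballI impI)
    fix z assume "z \<in> {0..1}" "y0 \<le> z \<and> z < y0 + 1"
    then have "U x z \<le> 1" using U_in_unit x by auto
    then show "U x z < U x y0 + \<epsilon>" using False ep by auto
  qed auto
qed

lemma left_lower_of_le_e:
  assumes x: "0 \<le> x" "x \<le> 1" and y: "0 \<le> y0" "y0 \<le> 1" and le: "U x y0 \<le> e" and ep: "\<epsilon> > 0"
  shows "\<exists>\<delta>>0. \<forall>z\<in>{0..1}. y0 - \<delta> < z \<and> z \<le> y0 \<longrightarrow> U x y0 - \<epsilon> < U x z"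
proof (cases "0 \<le> U x y0 - \<epsilon>/2")
  case True
  obtain zl where zl: "0 \<le> zl" "zl \<le> 1" "U x zl = U x y0 - \<epsilon>/2"
    using section_attains_below[OF x y le True] ep by auto
  have "zl < y0"
  proof (rule ccontr)
    assume "\<not> zl < y0" then have "U x y0 \<le> U x zl" using U_mono_right[of x y0 zl] x y zl by auto
    then show False using zl ep by auto
  qed
  then show ?thesis
  proof (intro exI[of _ "y0 - zl"] conjI ballI impI)
    fix z assume "z \<in> {0..1}" "y0 - (y0 - zl) < z \<and> z \<le> y0"
    then have "U x zl \<le> U x z" using U_mono_right[of x zl z] x zl by auto
    then show "U x y0 - \<epsilon> < U x z" using zl ep by auto
  qed auto
next
  case False
  show ?thesis
  proof (intro exI[of _ 1] conjI ballI impI)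
    fix z assume "z \<in> {0..1}" "y0 - 1 < z \<and> z \<le> y0"
    then have "0 \<le> U x z" using U_in_unit x by auto
    then show "U x y0 - \<epsilon> < U x z" using False ep by auto
  qed auto
qed

lemma left_lower_of_ge_e_before:
  assumes x: "0 \<le> x" "x \<le> 1" and y: "0 \<le> y0" "y0 \<le> 1" and z0: "0 \<le> z0" "z0 < y0"
  and ge: "e \<le> U x z0" and ep: "\<epsilon> > 0"
  shows "\<exists>\<delta>>0. \<forall>z\<in>{0..1}. y0 - \<delta> < z \<and> z \<le> y0 \<longrightarrow> U x y0 - \<epsilon> < U x z"
proof (cases "U x y0 - \<epsilon>/2 \<le> U x z0")
  case True
  show ?thesis
  proof (intro exI[of _ "y0 - z0"] conjI ballI impI)
    fix z assume "z \<in> {0..1}" "y0 - (y0 - z0) < z \<and> z \<le> y0"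
    then have "U x z0 \<le> U x z" using U_mono_right[of x z0 z] x z0 by auto
    then show "U x y0 - \<epsilon> < U x z" using True ep by auto
  qed (use z0 in auto)
next
  case False
  have "U x y0 \<le> 1" using U_in_unit x y by auto
  obtain zl where zl: "0 \<le> zl" "zl \<le> 1" "U x zl = U x y0 - \<epsilon>/2"
    using section_attains_above[OF x _ _ ge, of "U x y0 - \<epsilon>/2"] False ep z0 y \<open>U x y0 \<le> 1\<close> by auto
  have "zl < y0"
  proof (rule ccontr)
    assume "\<not> zl < y0" then have "U x y0 \<le> U x zl" using U_mono_right[of x y0 zl] x y zl by auto
    then show False using zl ep by auto
  qed
  then show ?thesis
  proof (intro exI[of _ "y0 - zl"] conjI ballI impI)
    fix z assume "z \<in> {0..1}" "y0 - (y0 - zl) < z \<and> z \<le> y0"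
    then have "U x zl \<le> U x z" using U_mono_right[of x zl z] x zl by auto
    then show "U x y0 - \<epsilon> < U x z" using zl ep by auto
  qed auto
qed

lemma right_upper_of_le_e_after:
  assumes x: "0 \<le> x" "x \<le> 1" and y: "0 \<le> y0" "y0 \<le> 1" and z0: "y0 < z0" "z0 \<le> 1"
  and le: "U x z0 \<le> e" and ep: "\<epsilon> > 0"
  shows "\<exists>\<delta>>0. \<forall>z\<in>{0..1}. y0 \<le> z \<and> z < y0 + \<delta> \<longrightarrow> U x z < U x y0 + \<epsilon>"
proof (cases "U x z0 \<le> U x y0 + \<epsilon>/2")
  case True
  show ?thesis
  proof (intro exI[of _ "z0 - y0"] conjI ballI impI)
    fix z assume "z \<in> {0..1}" "y0 \<le> z \<and> z < y0 + (z0 - y0)"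
    then have "U x z \<le> U x z0" using U_mono_right[of x z z0] x z0 by auto
    then show "U x z < U x y0 + \<epsilon>" using True ep by auto
  qed (use z0 in auto)
next
  case False
  have "0 \<le> U x y0" using U_in_unit x y by auto
  obtain zr where zr: "0 \<le> zr" "zr \<le> 1" "U x zr = U x y0 + \<epsilon>/2"
    using section_attains_below[OF x _ _ le, of "U x y0 + \<epsilon>/2"] False ep z0 y \<open>0 \<le> U x y0\<close> by auto
  have "y0 < zr"
  proof (rule ccontr)
    assume "\<not> y0 < zr" then have "U x zr \<le> U x y0" using U_mono_right[of x zr y0] x y zr by auto
    then show False using zr ep by auto
  qed
  then show ?thesis
  proof (intro exI[of _ "zr - y0"] conjI ballI impI)
    fix z assume "z \<in> {0..1}" "y0 \<le> z \<and> z < y0 + (zr - y0)"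
    then have "U x z \<le> U x zr" using U_mono_right[of x z zr] x zr by auto
    then show "U x z < U x y0 + \<epsilon>" using zr ep by auto
  qed auto
qed

lemma mono_on_section: "0 \<le> x \<Longrightarrow> x \<le> 1 \<Longrightarrow> mono_on {0..1} (U x)"
  by (auto intro!: mono_onI U_mono_right)

lemma discontinuity_jumps_over_e:
  assumes x: "0 \<le> x" "x \<le> 1" and y: "0 \<le> y0" "y0 \<le> 1"
    and nc: "\<not> continuous (at y0 within {0..1}) (U x)"
  shows "\<forall>z. 0 \<le> z \<and> z < y0 \<longrightarrow> U x z < e" and "\<forall>z. y0 < z \<and> z \<le> 1 \<longrightarrow> e < U x z"
proof -
  show "\<forall>z. 0 \<le> z \<and> z < y0 \<longrightarrow> U x z < e"
  proof (intro allI impI, rule ccontr)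
    fix z0 assume z0: "0 \<le> z0 \<and> z0 < y0" and "\<not> U x z0 < e"
    then have ge: "e \<le> U x z0" by auto
    have "e \<le> U x y0" using ge U_mono_right[of x z0 y0] x y z0 by auto
    then have "continuous (at y0 within {0..1}) (U x)"
      using continuous_within_mono_on_semicontinuous[OF mono_on_section[OF x] _ right_upper_of_ge_e[OF x y] left_lower_of_ge_e_before[OF x y _ _ ge]] y z0 by auto
    then show False using nc by auto
  qed
  show "\<forall>z. y0 < z \<and> z \<le> 1 \<longrightarrow> e < U x z"
  proof (intro allI impI, rule ccontr)
    fix z0 assume z0: "y0 < z0 \<and> z0 \<le> 1" and "\<not> e < U x z0"
    then have le: "U x z0 \<le> e" by auto
    have "U x y0 \<le> e" using le U_mono_right[of x y0 z0] x y z0 by auto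
    then have "continuous (at y0 within {0..1}) (U x)"
      using continuous_within_mono_on_semicontinuous[OF mono_on_section[OF x] _ right_upper_of_le_e_after[OF x y _ _ le] left_lower_of_le_e[OF x y]] y z0 by auto
    then show False using nc by auto
  qed
qed

lemma idempotent_min_below:
  assumes "0 \<le> i" "i \<le> e" "U i i = i" "0 \<le> v" "v \<le> i"
  shows "U i v = v"
proof -
  obtain s where s: "0 \<le> s" "s \<le> e" "U i s = v" using tnorm_section_onto[of i v] assms by auto
  have "U i v = U (U i i) s" using s U_assoc[of i i s] assms e1 by auto
  then show ?thesis using assms s by simp
qed

lemma idempotent_min_above:
  assumes "0 \<le> i" "i \<le> e" "U i i = i" "i \<le> v" "v \<le> e"
  shows "U i v = i"
proof -
  have "U i v \<le> i" using U_le_left[of v i] assms e1 by auto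
  moreover have "U i i \<le> U i v" using U_mono_right[of i i v] assms e1 by auto
  ultimately show ?thesis using assms by auto
qed

lemma idempotent_max_above:
  assumes "e \<le> i" "i \<le> 1" "U i i = i" "i \<le> v" "v \<le> 1"
  shows "U i v = v"
proof -
  obtain s where s: "e \<le> s" "s \<le> 1" "U i s = v" using tconorm_section_onto[of i v] assms by auto
  have "U i v = U (U i i) s" using s U_assoc[of i i s] assms e0 by auto
  then show ?thesis using assms s by simp
qed

lemma idempotent_max_below:
  assumes "e \<le> i" "i \<le> 1" "U i i = i" "e \<le> v" "v \<le> i"
  shows "U i v = i"
proof -
  have "i \<le> U i v" using U_ge_left[of v i] assms e0 by auto
  moreover have "U i v \<le> U i i" using U_mono_right[of i v i] assms e0 by auto
  ultimately show ?thesis using assms by auto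
qed

lemma idempotent_internal:
  assumes "0 \<le> i" "i \<le> e" "U i i = i" "e \<le> z" "z \<le> 1"
  shows "U i z = i \<or> U i z = z"
proof -
  define w where "w = U i z"
  have w01: "0 \<le> w" "w \<le> 1" using U_in_unit[of i z] assms e0 e1 by (auto simp: w_def)
  have iw: "U i w = w" using U_assoc[of i i z] assms e0 e1 by (auto simp: w_def)
  have wz: "w \<le> z" using U_le_right[of i z] assms e0 by (auto simp: w_def)
  have iw2: "i \<le> w" using U_ge_left[of z i] assms e0 by (auto simp: w_def)
  show ?thesis
  proof (cases "e \<le> w")
    case True
    obtain s where s: "e \<le> s" "s \<le> 1" "U w s = z" using tconorm_section_onto[of w z] True w01 wz assms by auto
    have "U i z = U (U i w) s" using U_assoc[of i w s] s w01 assms e0 e1 by auto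
    then show ?thesis using iw s by simp
  next
    case False
    then have "U i w = i" using idempotent_min_above[of i w] assms iw2 by auto
    then show ?thesis using iw w_def by auto
  qed
qed

end

subsection \<open>A gap below the neutral element\<close>

locale gap_below_e = class_U +
  fixes a b x1 x2 y :: real
  assumes a0: "0 \<le> a" and be: "b \<le> e" and ab: "a < b"
    and ia: "U a a = a" and ib: "U b b = b"
    and noidem: "\<And>t. a < t \<Longrightarrow> t < b \<Longrightarrow> U t t \<noteq> t"
    and x1a: "a < x1" and x12: "x1 < x2" and x2b: "x2 < b"
    and y01: "0 \<le> y" "y \<le> 1"
    and nc1: "\<not> continuous (at y within {0..1}) (U x1)"
    and nc2: "\<not> continuous (at y within {0..1}) (U x2)"
begin

lemma U_a_absorbs: "a \<le> x \<Longrightarrow> x \<le> e \<Longrightarrow> U x a = a"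
  using idempotent_min_above[of a x] U_commute[of x a] a0 ab be ia e0 e1 by auto

lemma U_b_neutral: "0 \<le> x \<Longrightarrow> x \<le> b \<Longrightarrow> U x b = x"
  using idempotent_min_below[of b x] U_commute[of x b] a0 ab be ib e0 e1 by auto

lemma continuous_on_gap_right: "a \<le> x \<Longrightarrow> x \<le> e \<Longrightarrow> continuous_on {a..b} (U x)"
  using continuous_on_tnorm_right[of x] a0 be by (auto intro: continuous_on_subset)

lemma continuous_on_gap_left: "a \<le> x \<Longrightarrow> x \<le> e \<Longrightarrow> continuous_on {a..b} (\<lambda>t. U t x)"
  using continuous_on_tnorm_left[of x] a0 be by (auto intro: continuous_on_subset)

lemma gap_divisible:
  assumes "a \<le> x" "x \<le> b" "a \<le> v" "v \<le> x"
  shows "\<exists>m. a \<le> m \<and> m \<le> b \<and> U x m = v"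
  by (rule IVT') (use assms U_a_absorbs U_b_neutral[of x] continuous_on_gap_right a0 be ab in auto)

text \<open>The least m with U x m = x would be idempotent, hence equal to a; but U x a = a.\<close>
lemma gap_no_partial_unit:
  assumes x: "a < x" "x < b" and m: "a \<le> m" "m < b"
  shows "U x m \<noteq> x"
proof
  assume eq: "U x m = x"
  define A where "A = {s\<in>{a..b}. U x s = x}"
  have clA: "closed A"
  proof -
    have "closed ({a..b} \<inter> U x -` {x})"
      by (rule continuous_closed_preimage) (use continuous_on_gap_right[of x] x be in auto)
    moreover have "A = {a..b} \<inter> U x -` {x}" by (auto simp: A_def)
    ultimately show ?thesis by simp
  qed
  have mA: "m \<in> A" using m eq by (auto simp: A_def)
  have bdd: "bdd_below A" by (auto simp: A_def bdd_below_def)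
  define m0 where "m0 = Inf A"
  have m0A: "m0 \<in> A" using closed_contains_Inf[OF _ bdd clA] mA by (auto simp: m0_def)
  have m0m: "m0 \<le> m" using cInf_lower[OF mA bdd] by (simp add: m0_def)
  have m0r: "a \<le> m0" "m0 \<le> b" "U x m0 = x" using m0A by (auto simp: A_def)
  have sq1: "U m0 m0 \<le> m0" using U_le_right[of m0 m0] m0r a0 be e0 e1 by auto
  have sq2: "a \<le> U m0 m0" using U_mono[of a m0 a m0] ia m0r a0 be e0 e1 by auto
  have sqA: "U m0 m0 \<in> A"
  proof -
    have "U x (U m0 m0) = U (U x m0) m0" using U_assoc[of x m0 m0] x m0r a0 be e0 e1 by auto
    then show ?thesis using m0r sq1 sq2 by (auto simp: A_def)
  qed
  have "m0 \<le> U m0 m0" using cInf_lower[OF sqA bdd] by (simp add: m0_def)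
  then have idm: "U m0 m0 = m0" using sq1 by auto
  have "m0 = a" using noidem[of m0] idm m0r m0m m by force
  then show False using m0r U_a_absorbs[of x] x be by auto
qed

lemma gap_strict_mono:
  assumes t: "a \<le> t" "t < b" and u: "a \<le> u" "u < u'" "u' \<le> b" and pos: "a < U t u'"
  shows "U t u < U t u'"
proof -
  obtain m where m: "a \<le> m" "m \<le> b" "U u' m = u" using gap_divisible[of u' u] u by auto
  have mb: "m \<noteq> b" using m U_b_neutral[of u'] u a0 by auto
  define w where "w = U t u'"
  have wle: "w \<le> t" using U_le_left[of u' t] u t a0 be e0 e1 by (auto simp: w_def)
  have "U t u = U w m" using U_assoc[of t u' m] m t u a0 be e0 e1 by (auto simp: w_def)
  moreover have "U w m \<le> w" using U_le_left[of m w] m wle t a0 be pos w_def e0 e1 by auto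
  moreover have "U w m \<noteq> w" using gap_no_partial_unit[of w m] pos wle t m mb w_def by auto
  ultimately show ?thesis by (auto simp: w_def)
qed

definition gap_fixed :: "real \<Rightarrow> bool" where "gap_fixed z \<longleftrightarrow> (\<forall>x. a < x \<and> x < b \<longrightarrow> U x z = x)"
definition gap_absorbed :: "real \<Rightarrow> bool" where "gap_absorbed z \<longleftrightarrow> (\<forall>x. a < x \<and> x < b \<longrightarrow> U x z = z)"
definition gap_between :: "real \<Rightarrow> bool" where "gap_between z \<longleftrightarrow> (\<forall>x. a < x \<and> x < b \<longrightarrow> x < U x z \<and> U x z < z)"

lemma U_left_commute: "0 \<le> x \<Longrightarrow> x \<le> 1 \<Longrightarrow> 0 \<le> m \<Longrightarrow> m \<le> 1 \<Longrightarrow> 0 \<le> z \<Longrightarrow> z \<le> 1 \<Longrightarrow> U (U x m) z = U m (U x z)"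
  using U_assoc[of m x z] U_commute[of x m] by auto

lemma gap_fixed_of_witness:
  assumes z: "e \<le> z" "z \<le> 1" and x0: "a < x0" "x0 < b" and fx: "U x0 z = x0"
  shows "gap_fixed z"
  unfolding gap_fixed_def
proof (intro allI impI)
  fix x assume x: "a < x \<and> x < b"
  show "U x z = x"
  proof (cases "x \<le> x0")
    case True
    obtain m where m: "a \<le> m" "m \<le> b" "U x0 m = x" using gap_divisible[of x0 x] True x x0 by auto
    have "U x z = U m (U x0 z)" using U_left_commute[of x0 m z] m x0 z a0 be e0 e1 by auto
    also have "\<dots> = U m x0" using fx by simp
    also have "\<dots> = x" using U_commute[of m x0] m x0 a0 be e0 e1 by auto
    finally show ?thesis .
  next
    case False
    define v where "v = U x z"
    have xv: "x \<le> v" using U_ge_left[of z x] z x a0 be e0 e1 by (auto simp: v_def)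
    have vz: "v \<le> z" using U_le_right[of x z] z x a0 be e0 e1 by (auto simp: v_def)
    show ?thesis
    proof (rule ccontr)
      assume ne: "U x z \<noteq> x"
      then have xv': "x < v" using xv v_def by auto
      obtain m where m: "a \<le> m" "m \<le> b" "U x m = x0" using gap_divisible[of x x0] False x x0 by auto
      have ma: "m \<noteq> a" using m U_a_absorbs[of x] x x0 be by auto
      have mb: "m \<noteq> b" using m U_b_neutral[of x] x x0 a0 False by auto
      have "x0 = U m v" using U_left_commute[of x m z] m x z a0 be e0 e1 fx by (auto simp: v_def)
      show False
      proof (cases "v \<le> b")
        case True
        have "U m x < U m v" using gap_strict_mono[of m x v] m ma mb x xv' True \<open>x0 = U m v\<close> x0 by auto
        moreover have "U m x = x0" using U_commute[of m x] m x a0 be e0 e1 by auto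
        ultimately show False using \<open>x0 = U m v\<close> by auto
      next
        case False
        have "U m b \<le> U m v" using U_mono_right[of m b v] m False vz z a0 be e0 e1 by auto
        moreover have "U m b = m" using U_b_neutral[of m] m a0 by auto
        moreover have "x0 \<le> m" using U_le_right[of x m] m x a0 be e0 e1 by auto
        moreover have "x0 \<noteq> m"
        proof
          assume "x0 = m"
          then have "U x0 x = x0" using m U_commute[of x m] x a0 be e0 e1 by auto
          then show False using gap_no_partial_unit[of x0 x] x0 x by auto
        qed
        ultimately show False using \<open>x0 = U m v\<close> by auto
      qed
    qed
  qed
qed

lemma gap_absorbed_of_witness:
  assumes z: "e \<le> z" "z \<le> 1" and x0: "a < x0" "x0 < b" and fx: "U x0 z = z"
  shows "gap_absorbed z"
  unfolding gap_absorbed_def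
proof (rule ccontr)
  assume "\<not> (\<forall>x. a < x \<and> x < b \<longrightarrow> U x z = z)"
  then obtain x where x: "a < x" "x < b" "U x z \<noteq> z" by auto
  define S where "S = {u. a < u \<and> u < b \<and> U u z = z}"
  have up: "\<And>u u'. u \<in> S \<Longrightarrow> u \<le> u' \<Longrightarrow> u' < b \<Longrightarrow> u' \<in> S"
  proof -
    fix u u' assume u: "u \<in> S" "u \<le> u'" "u' < b"
    have "U u z \<le> U u' z" using U_mono_left[of u u' z] u z a0 be e0 e1 by (auto simp: S_def)
    moreover have "U u' z \<le> z" using U_le_right[of u' z] u z a0 be e0 e1 by (auto simp: S_def)
    ultimately show "u' \<in> S" using u by (auto simp: S_def)
  qed
  have x0S: "x0 \<in> S" using x0 fx by (auto simp: S_def)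
  have bdd: "bdd_below S" unfolding bdd_below_def S_def by (rule exI[of _ a]) auto
  define c where "c = Inf S"
  have xc: "x \<le> c"
    unfolding c_def
  proof (rule cInf_greatest)
    show "S \<noteq> {}" using x0S by auto
    fix u assume "u \<in> S"
    show "x \<le> u"
    proof (rule ccontr)
      assume "\<not> x \<le> u"
      then have "x \<in> S" using up[of u x] \<open>u \<in> S\<close> x by auto
      then show False using x by (auto simp: S_def)
    qed
  qed
  have cx0: "c \<le> x0" using cInf_lower[OF x0S bdd] by (simp add: c_def)
  have ca: "a < c" "c < b" using xc x cx0 x0 by auto
  have lt: "U c x0 < c"
  proof -
    have "U c x0 \<le> c" using U_le_left[of x0 c] ca x0 a0 be e0 e1 by auto
    moreover have "U c x0 \<noteq> c" using gap_no_partial_unit[of c x0] ca x0 by auto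
    ultimately show ?thesis by auto
  qed
  have cont: "continuous_on {a..b} (\<lambda>t. U t x0)" using continuous_on_gap_left[of x0] x0 be by auto
  then have "continuous (at c within {a..b}) (\<lambda>t. U t x0)"
    using ca continuous_on_eq_continuous_within[of "{a..b}" "\<lambda>t. U t x0"] by auto
  then obtain d where d: "d > 0" "\<forall>t\<in>{a..b}. dist t c < d \<longrightarrow> dist (U t x0) (U c x0) < c - U c x0"
    unfolding continuous_within_eps_delta using lt by (metis diff_gt_0_iff_gt)
  have "Inf S < c + d" using d by (simp add: c_def)
  then obtain u where u: "u \<in> S" "u < c + d" using cInf_lessD[of S "c+d"] x0S by auto
  have cu: "c \<le> u" using cInf_lower[OF u(1) bdd] by (simp add: c_def)
  have uab: "a < u" "u < b" using u by (auto simp: S_def)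
  have "dist (U u x0) (U c x0) < c - U c x0" using d uab cu u by (auto simp: dist_real_def)
  then have ulc: "U u x0 < c" by (auto simp: dist_real_def)
  have uz: "U (U u x0) z = z"
  proof -
    have "U (U u x0) z = U u (U x0 z)" using U_assoc[of u x0 z] uab x0 z a0 be e0 e1 by auto
    then show ?thesis using fx u by (auto simp: S_def)
  qed
  have uxa: "a \<le> U u x0" using U_mono[of a u a x0] ia uab x0 a0 be e0 e1 by auto
  show False
  proof (cases "U u x0 = a")
    case True
    then have "U a z = z" using uz by simp
    moreover have "U a z \<le> U x z" using U_mono_left[of a x z] x z a0 be e0 e1 by auto
    moreover have "U x z \<le> z" using U_le_right[of x z] x z a0 be e0 e1 by auto
    ultimately show False using x by auto
  next
    case False
    then have "U u x0 \<in> S" using uxa ulc ca uz by (auto simp: S_def)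
    then have "c \<le> U u x0" using cInf_lower[OF _ bdd] by (simp add: c_def)
    then show False using ulc by auto
  qed
qed

lemma gap_trichotomy:
  assumes z: "e \<le> z" "z \<le> 1"
  shows "gap_fixed z \<or> gap_absorbed z \<or> gap_between z"
proof -
  have "\<not> gap_fixed z \<Longrightarrow> \<not> gap_absorbed z \<Longrightarrow> gap_between z"
    unfolding gap_between_def
  proof (intro allI impI)
    fix x assume ni: "\<not> gap_fixed z" and nz: "\<not> gap_absorbed z" and x: "a < x \<and> x < b"
    have "x \<le> U x z" using U_ge_left[of z x] z x a0 be e0 e1 by auto
    moreover have "U x z \<le> z" using U_le_right[of x z] z x a0 be e0 e1 by auto
    moreover have "U x z \<noteq> x" using gap_fixed_of_witness[of z x] ni x z by auto
    moreover have "U x z \<noteq> z" using gap_absorbed_of_witness[of z x] nz x z by auto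
    ultimately show "x < U x z \<and> U x z < z" by auto
  qed
  then show ?thesis by auto
qed

lemma U_eq_b_of_ge_b:
  assumes x: "0 \<le> x" "x \<le> b" and z: "0 \<le> z" "z \<le> 1" and v: "b \<le> U x z" "U x z \<le> e"
  shows "U x z = b"
proof -
  have "U x z = U (U x b) z" using U_b_neutral[of x] x by simp
  also have "\<dots> = U b (U x z)" using U_left_commute[of x b z] x z a0 ab be e0 e1 by auto
  also have "\<dots> = b" using idempotent_min_above[of b "U x z"] v ib a0 ab be by auto
  finally show ?thesis .
qed

lemma idempotent_not_gap_between:
  assumes z: "e \<le> z" "z \<le> 1" "U z z = z"
  shows "\<not> gap_between z"
proof
  assume m: "gap_between z"
  define x where "x = (a + b) / 2"
  have x: "a < x" "x < b" using ab by (auto simp: x_def)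
  define v where "v = U x z"
  have mx: "x < v" "v < z" using m x by (auto simp: gap_between_def v_def)
  have vv: "U v z = v" using U_assoc[of x z z] x z a0 be e0 e1 by (auto simp: v_def)
  show False
  proof (cases "e \<le> v")
    case True
    then have "z \<le> U v z" using U_ge_right[of v z] z mx e0 e1 by auto
    then show False using vv mx by auto
  next
    case False
    show False
    proof (cases "v < b")
      case True
      then have "v < U v z" using m mx x by (auto simp: gap_between_def)
      then show False using vv by auto
    next
      case False
      then have vb: "v = b" using U_eq_b_of_ge_b[of x z] x z \<open>\<not> e \<le> v\<close> a0 by (auto simp: v_def)
      obtain r where r: "a \<le> r" "r \<le> b" "U x r = (a + x) / 2" using gap_divisible[of x "(a+x)/2"] x by auto
      have ra: "r \<noteq> a" using r U_a_absorbs[of x] x be by auto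
      have rb: "r \<noteq> b" using r U_b_neutral[of x] x a0 by auto
      define x' where "x' = U x r"
      have x'ab: "a < x'" "x' < b" using r x by (auto simp: x'_def)
      have "U x' z = U r (U x z)" unfolding x'_def by (rule U_left_commute) (use x r z a0 be e0 e1 in auto)
      also have "\<dots> = r" using U_b_neutral[of r] r a0 vb v_def U_commute[of r b] ab be e0 e1 by auto
      finally have x'z: "U x' z = r" .
      have "U r z = U x' (U z z)" using U_assoc[of x' z z] x'z x'ab z a0 be e0 e1 by auto
      then have "U r z = r" using z x'z by simp
      moreover have "r < U r z" using m r ra rb unfolding gap_between_def by auto
      ultimately show False by auto
    qed
  qed
qed

lemma x_bounds:
  "x1 < x2" "a < x1" "x1 < b" "a < x2" "x2 < b" "0 \<le> x1" "x1 \<le> 1" "0 \<le> x2" "x2 \<le> 1" "x1 < e" "x2 < e"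
  using x1a x12 x2b a0 be e0 e1 by auto

lemma U_lt_e_below_y:
  assumes "0 \<le> x" "x \<le> x2" "0 \<le> z" "z < y"
  shows "U x z < e"
proof -
  have "U x2 z < e" using discontinuity_jumps_over_e(1)[of x2 y] nc2 y01 x_bounds assms by auto
  moreover have "U x z \<le> U x2 z" using U_mono_left[of x x2 z] assms x_bounds y01 by auto
  ultimately show ?thesis by auto
qed

lemma U_gt_e_above_y:
  assumes "x1 \<le> x" "x \<le> 1" "y < z" "z \<le> 1"
  shows "e < U x z"
proof -
  have "e < U x1 z" using discontinuity_jumps_over_e(2)[of x1 y] nc1 y01 x_bounds assms by auto
  moreover have "U x1 z \<le> U x z" using U_mono_left[of x1 x z] assms x_bounds y01 by auto
  ultimately show ?thesis by auto
qed

lemma e_le_y: "e \<le> y"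
proof (rule ccontr)
  assume "\<not> e \<le> y"
  then have "e < U x1 e" using U_gt_e_above_y[of x1 e] x_bounds e0 e1 by auto
  then show False using U_neutral_right[of x1] x_bounds by auto
qed

lemma not_gap_absorbed_below_y: "e \<le> z \<Longrightarrow> z < y \<Longrightarrow> \<not> gap_absorbed z"
  using U_lt_e_below_y[of x2 z] x_bounds e0 e1 unfolding gap_absorbed_def by force

lemma not_gap_fixed_above_y: "y < z \<Longrightarrow> z \<le> 1 \<Longrightarrow> \<not> gap_fixed z"
  using U_gt_e_above_y[of x1 z] x_bounds unfolding gap_fixed_def by force

lemma gap_fixed_downward:
  assumes "gap_fixed z" "e \<le> z'" "z' \<le> z" "z \<le> 1"
  shows "gap_fixed z'"
  unfolding gap_fixed_def
proof (intro allI impI)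
  fix x assume x: "a < x \<and> x < b"
  have "x \<le> U x z'" using U_ge_left[of z' x] assms x a0 be e0 e1 by auto
  moreover have "U x z' \<le> U x z" using U_mono_right[of x z' z] assms x a0 be e0 e1 by auto
  ultimately show "U x z' = x" using assms x unfolding gap_fixed_def by force
qed

lemma gap_absorbed_upward:
  assumes "gap_absorbed z" "e \<le> z" "z \<le> z'" "z' \<le> 1"
  shows "gap_absorbed z'"
  unfolding gap_absorbed_def
proof (intro allI impI)
  fix x assume x: "a < x \<and> x < b"
  obtain s where s: "e \<le> s" "s \<le> 1" "U z s = z'" using tconorm_section_onto[of z z'] assms by auto
  have "U x z' = U (U x z) s" using U_assoc[of x z s] s x assms a0 be e0 e1 by auto
  then show "U x z' = z'" using assms x s unfolding gap_absorbed_def by auto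
qed

definition gap_mid :: real where "gap_mid = (a + b) / 2"

lemma gap_mid: "a < gap_mid" "gap_mid < b"
  using ab by (auto simp: gap_mid_def)

lemma gap_between_not_fixed: "gap_between z \<Longrightarrow> \<not> gap_fixed z"
  using gap_mid unfolding gap_between_def gap_fixed_def by force

lemma gap_between_not_absorbed: "gap_between z \<Longrightarrow> \<not> gap_absorbed z"
  using gap_mid unfolding gap_between_def gap_absorbed_def by force

lemma gap_fixed_below_y: "e \<le> z \<Longrightarrow> z < y \<Longrightarrow> \<not> gap_between z \<Longrightarrow> gap_fixed z"
  using gap_trichotomy[of z] not_gap_absorbed_below_y[of z] y01 by auto

lemma not_gap_between_e: "\<not> gap_between e"
proof
  assume "gap_between e"
  then have "gap_mid < U gap_mid e" using gap_mid unfolding gap_between_def by auto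
  then show False using U_neutral_right[of gap_mid] gap_mid a0 be e0 e1 by auto
qed

lemma continuous_x1_below_y:
  assumes "0 \<le> z" "z < y"
  shows "continuous (at z within {0..1}) (U x1)"
proof (rule ccontr)
  assume "\<not> continuous (at z within {0..1}) (U x1)"
  then have "e < U x1 ((z + y) / 2)" using discontinuity_jumps_over_e(2)[of x1 z] assms x_bounds y01 by auto
  moreover have "U x1 ((z + y) / 2) < e" using U_lt_e_below_y[of x1 "(z+y)/2"] assms x_bounds x12 by auto
  ultimately show False by auto
qed

text \<open>Otherwise the infimum \<iota> of such z separates points where U x1 z = x1 from points where
  U x1 z > x2, which is impossible as U x1 is continuous at \<iota> < y.\<close>
lemma ex_between_below_y_le_x2:
  assumes ex: "e \<le> z0" "z0 < y" "gap_between z0"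
  shows "\<exists>z'. e \<le> z' \<and> z' < y \<and> gap_between z' \<and> U x1 z' \<le> x2"
proof (rule ccontr)
  assume "\<not> ?thesis"
  then have big: "\<And>z'. e \<le> z' \<Longrightarrow> z' < y \<Longrightarrow> gap_between z' \<Longrightarrow> x2 < U x1 z'" by force
  define I where "I = {z'. e \<le> z' \<and> z' < y \<and> gap_between z'}"
  have z0I: "z0 \<in> I" using ex by (auto simp: I_def)
  have bdd: "bdd_below I" unfolding bdd_below_def I_def by (rule exI[of _ e]) auto
  define \<iota> where "\<iota> = Inf I"
  have ie: "e \<le> \<iota>" unfolding \<iota>_def by (rule cInf_greatest) (use z0I in \<open>auto simp: I_def\<close>)
  have iz0: "\<iota> \<le> z0" using cInf_lower[OF z0I bdd] by (simp add: \<iota>_def)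
  have below: "\<And>z. e \<le> z \<Longrightarrow> z < \<iota> \<Longrightarrow> U x1 z = x1"
  proof -
    fix z assume z: "e \<le> z" "z < \<iota>"
    have "\<not> gap_between z"
    proof
      assume "gap_between z"
      then have "z \<in> I" using z iz0 ex by (auto simp: I_def)
      then show False using cInf_lower[OF _ bdd, of z] z by (simp add: \<iota>_def)
    qed
    then have "gap_fixed z" using gap_fixed_below_y[of z] z iz0 ex by auto
    then show "U x1 z = x1" using x_bounds unfolding gap_fixed_def by auto
  qed
  have cont: "continuous (at \<iota> within {0..1}) (U x1)" using continuous_x1_below_y[of \<iota>] ie iz0 ex e0 e1 by auto
  show False
  proof (cases "\<iota> \<in> I")
    case True
    then have mi: "gap_between \<iota>" by (auto simp: I_def)
    then have ine: "\<iota> \<noteq> e" using not_gap_between_e by auto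
    have bi: "x2 < U x1 \<iota>" using big[of \<iota>] True by (auto simp: I_def)
    obtain d where d: "d > 0" "\<forall>z\<in>{0..1}. dist z \<iota> < d \<longrightarrow> dist (U x1 z) (U x1 \<iota>) < U x1 \<iota> - x1"
    proof -
      have "U x1 \<iota> - x1 > 0" using bi x12 by auto
      then show ?thesis using cont[unfolded continuous_within_eps_delta, rule_format, of "U x1 \<iota> - x1"] that by blast
    qed
    define z where "z = max e (\<iota> - d / 2)"
    have z: "e \<le> z" "z < \<iota>" "dist z \<iota> < d" using ine ie d by (auto simp: z_def dist_real_def)
    have "U x1 z = x1" using below z by auto
    moreover have "dist (U x1 z) (U x1 \<iota>) < U x1 \<iota> - x1" using d z ie iz0 ex y01 e0 e1 by auto
    ultimately show False by (auto simp: dist_real_def)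
  next
    case False
    have "\<not> gap_between \<iota>" using False ie iz0 ex by (auto simp: I_def)
    then have "gap_fixed \<iota>" using gap_fixed_below_y[of \<iota>] ie iz0 ex by auto
    then have ui: "U x1 \<iota> = x1" using x_bounds unfolding gap_fixed_def by auto
    obtain d where d: "d > 0" "\<forall>z\<in>{0..1}. dist z \<iota> < d \<longrightarrow> dist (U x1 z) (U x1 \<iota>) < x2 - x1"
    proof -
      have "x2 - x1 > 0" using x12 by auto
      then show ?thesis using cont[unfolded continuous_within_eps_delta, rule_format, of "x2 - x1"] that by blast
    qed
    have "Inf I < \<iota> + d" using d by (simp add: \<iota>_def)
    then obtain z where z: "z \<in> I" "z < \<iota> + d" using cInf_lessD[of I "\<iota> + d"] z0I by auto
    have iz: "\<iota> \<le> z" using cInf_lower[OF z(1) bdd] by (simp add: \<iota>_def)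
    have "x2 < U x1 z" using big[of z] z by (auto simp: I_def)
    moreover have "dist (U x1 z) (U x1 \<iota>) < x2 - x1" using d z iz ie y01 e0 e1 by (auto simp: I_def dist_real_def)
    ultimately show False using ui by (auto simp: dist_real_def)
  qed
qed

lemma e_lt_y_if_not_idempotent_y:
  assumes "U y y \<noteq> y" shows "e < y"
proof -
  have "y \<noteq> e" using assms U_neutral_right[of e] e0 e1 by auto
  then show ?thesis using e_le_y by auto
qed

lemma y_lt_U_y_if_not_idempotent_y:
  assumes ny: "U y y \<noteq> y" and z: "e \<le> z'" "z' < y" and m: "gap_between z'"
  shows "y < U z' y"
proof -
  have ye: "e < y" using e_lt_y_if_not_idempotent_y[OF ny] .
  have y1: "y \<le> 1" using y01 by auto
  have gey: "y \<le> U z' y" using U_ge_right[of z' y] z y01 e0 e1 by auto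
  show "y < U z' y"
  proof (rule ccontr)
    assume "\<not> y < U z' y"
    then have eqy: "U z' y = y" using gey by auto
    define A where "A = {s\<in>{z'..y}. U s y = y}"
    have clA: "closed A"
    proof -
      have "closed ({z'..y} \<inter> (\<lambda>s. U s y) -` {y})"
        by (rule continuous_closed_preimage) (use continuous_on_tconorm_left[of y] z ye y1 in \<open>auto intro: continuous_on_subset\<close>)
      moreover have "A = {z'..y} \<inter> (\<lambda>s. U s y) -` {y}" by (auto simp: A_def)
      ultimately show ?thesis by simp
    qed
    have zA: "z' \<in> A" using eqy z by (auto simp: A_def)
    have bdd: "bdd_above A" unfolding bdd_above_def A_def by (rule exI[of _ y]) auto
    define m where "m = Sup A"
    have mA: "m \<in> A" using closed_contains_Sup[OF _ bdd clA] zA by (auto simp: m_def)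
    have mr: "z' \<le> m" "m \<le> y" "U m y = y" using mA by (auto simp: A_def)
    have sq1: "m \<le> U m m" using U_ge_right[of m m] mr z y1 e0 e1 by auto
    have sq2: "U m m \<le> y" using U_mono_right[of m m y] mr z y1 e0 e1 by auto
    have sqA: "U m m \<in> A"
    proof -
      have "U (U m m) y = U m (U m y)" using U_assoc[of m m y] mr z y1 e0 e1 by auto
      then show ?thesis using mr sq1 sq2 by (auto simp: A_def)
    qed
    have "U m m \<le> m" using cSup_upper[OF sqA bdd] by (simp add: m_def)
    then have idm: "U m m = m" using sq1 by auto
    have my: "m < y" using idm ny mr by (cases "m = y") auto
    have "\<not> gap_fixed m" using gap_fixed_downward[of m z'] m gap_between_not_fixed mr z y1 by auto
    moreover have "\<not> gap_absorbed m" using not_gap_absorbed_below_y[of m] mr z my by auto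
    ultimately have "gap_between m" using gap_trichotomy[of m] mr z y1 by auto
    then show False using idempotent_not_gap_between[of m] idm mr z y1 by auto
  qed
qed

lemma x2_lt_U_x1_if_not_idempotent_y:
  assumes ny: "U y y \<noteq> y" and z: "e \<le> z'" "z' < y" and m: "gap_between z'"
  shows "x2 < U x1 z'"
proof -
  have ye: "e < y" using e_lt_y_if_not_idempotent_y[OF ny] .
  have y1: "y \<le> 1" using y01 by auto
  have gt: "y < U z' y" using y_lt_U_y_if_not_idempotent_y[OF ny z m] .
  have cont: "continuous (at y within {e..1}) (U z')"
    using continuous_on_tconorm_right[of z'] z y1 ye continuous_on_eq_continuous_within[of "{e..1}" "U z'"] by auto
  obtain d where d: "d > 0" "\<forall>s\<in>{e..1}. dist s y < d \<longrightarrow> dist (U z' s) (U z' y) < U z' y - y"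
  proof -
    have "U z' y - y > 0" using gt by auto
    then show ?thesis using cont[unfolded continuous_within_eps_delta, rule_format, of "U z' y - y"] that by blast
  qed
  define s where "s = max e (y - d / 2)"
  have s: "e \<le> s" "s < y" "dist s y < d" using ye d by (auto simp: s_def dist_real_def)
  have "dist (U z' s) (U z' y) < U z' y - y" using d s y1 by auto
  then have zs: "y < U z' s" by (auto simp: dist_real_def)
  have zs1: "U z' s \<le> 1" using U_in_unit[of z' s] z s y1 e0 e1 by auto
  define v where "v = U x1 z'"
  have "U v s = U x1 (U z' s)" using U_assoc[of x1 z' s] z s x_bounds y1 e0 e1 by (auto simp: v_def)
  then have hv: "e < U v s" using U_gt_e_above_y[of x1 "U z' s"] zs zs1 x_bounds by auto
  show ?thesis
  proof (rule ccontr)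
    assume "\<not> x2 < U x1 z'"
    then have vx: "v \<le> x2" by (simp add: v_def)
    have v0: "0 \<le> v" using U_in_unit[of x1 z'] z x_bounds y1 e0 e1 by (auto simp: v_def)
    have "U v s < e" using U_lt_e_below_y[of v s] vx v0 s e0 e1 by auto
    then show False using hv by auto
  qed
qed

lemma ex_between_below_y_if_not_idempotent_y:
  assumes ny: "U y y \<noteq> y" and z0: "e \<le> z0" "z0 \<le> 1" "gap_between z0"
  shows "\<exists>z'. e \<le> z' \<and> z' < y \<and> gap_between z'"
proof (rule ccontr)
  assume "\<not> ?thesis"
  then have noM: "\<And>z'. e \<le> z' \<Longrightarrow> z' < y \<Longrightarrow> \<not> gap_between z'" by blast
  have ye: "e < y" using e_lt_y_if_not_idempotent_y[OF ny] .
  have y1: "y \<le> 1" using y01 by auto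
  have z0y: "y \<le> z0" using noM[of z0] z0 by force
  have gey: "y \<le> U y y" using U_ge_right[of y y] ye y1 e0 e1 by auto
  have cont: "continuous (at y within {e..1}) (\<lambda>s. U s y)"
    using continuous_on_tconorm_left[of y] y1 ye continuous_on_eq_continuous_within[of "{e..1}" "\<lambda>s. U s y"] by auto
  obtain d where d: "d > 0" "\<forall>s\<in>{e..1}. dist s y < d \<longrightarrow> dist (U s y) (U y y) < U y y - y"
  proof -
    have "U y y - y > 0" using gey ny by auto
    then show ?thesis using cont[unfolded continuous_within_eps_delta, rule_format, of "U y y - y"] that by blast
  qed
  define z' where "z' = max e (y - d / 2)"
  have z': "e \<le> z'" "z' < y" "dist z' y < d" using ye d by (auto simp: z'_def dist_real_def)
  have "dist (U z' y) (U y y) < U y y - y" using d z' y1 by auto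
  then have gt: "y < U z' y" by (auto simp: dist_real_def)
  have TIz': "gap_fixed z'" using gap_fixed_below_y[of z'] noM[of z'] z' by auto
  obtain z where zr: "y \<le> z" "z < U z' y" "z \<le> 1" "gap_between z"
  proof (cases "z0 < U z' y")
    case True
    then show ?thesis using that z0 z0y by auto
  next
    case False
    define z where "z = (y + U z' y) / 2"
    have zz: "y < z" "z < U z' y" "z \<le> z0" using gt False by (auto simp: z_def)
    have "\<not> gap_fixed z" using not_gap_fixed_above_y[of z] zz z0 by auto
    moreover have "\<not> gap_absorbed z" using gap_absorbed_upward[of z z0] zz z0 gap_between_not_absorbed ye by auto
    ultimately have "gap_between z" using gap_trichotomy[of z] zz z0 ye by auto
    then show ?thesis using that[of z] zz z0 by auto
  qed
  have "\<exists>s. e \<le> s \<and> s \<le> y \<and> U z' s = z"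
    by (rule IVT') (use zr z' U_neutral_right[of z'] ye y1 continuous_on_tconorm_right[of z'] e0 e1 in \<open>auto intro: continuous_on_subset\<close>)
  then obtain s where s: "e \<le> s" "s \<le> y" "U z' s = z" by auto
  have sy: "s < y" using s zr by (cases "s = y") auto
  have TIs: "gap_fixed s" using gap_fixed_below_y[of s] noM[of s] s sy by auto
  have "gap_fixed z"
    unfolding gap_fixed_def
  proof (intro allI impI)
    fix x assume x: "a < x \<and> x < b"
    have "U x z = U (U x z') s" using U_assoc[of x z' s] s x z' y1 a0 be e0 e1 by auto
    also have "\<dots> = x" using TIz' TIs x unfolding gap_fixed_def by auto
    finally show "U x z = x" .
  qed
  then show False using gap_between_not_fixed zr by auto
qed

lemma not_between_below_y_if_fixed_idempotent_y:
  assumes iy: "U y y = y" and ti: "gap_fixed y" and z: "e \<le> z'" "z' < y"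
  shows "\<not> gap_between z'"
proof
  assume m: "gap_between z'"
  have y1: "y \<le> 1" using y01 by auto
  define v where "v = U x1 z'"
  have vx: "x1 < v" using m x_bounds unfolding gap_between_def v_def by auto
  have ve: "v < e" using U_lt_e_below_y[of x1 z'] x_bounds x12 z e0 e1 by (auto simp: v_def)
  have zy: "U z' y = y" using idempotent_max_below[of y z'] U_commute[of z' y] iy e_le_y y1 z e0 e1 by auto
  have vy: "U v y = x1"
  proof -
    have "U v y = U x1 (U z' y)" using U_assoc[of x1 z' y] z x_bounds y1 e0 e1 by (auto simp: v_def)
    then show ?thesis using zy ti x_bounds unfolding gap_fixed_def by auto
  qed
  show False
  proof (cases "v < b")
    case True
    then have "U v y = v" using ti vx x_bounds unfolding gap_fixed_def by auto
    then show False using vy vx by auto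
  next
    case False
    then have "v = b" using U_eq_b_of_ge_b[of x1 z'] x_bounds z y1 ve e0 e1 by (auto simp: v_def)
    then have "U b y = b \<or> U b y = y" using idempotent_internal[of b y] ib a0 ab be e_le_y y1 by auto
    then show False using vy \<open>v = b\<close> x_bounds e_le_y by auto
  qed
qed

definition U_iter :: "real \<Rightarrow> nat \<Rightarrow> real" where
  "U_iter z n = (U z ^^ n) e"

lemma U_iter_0: "U_iter z 0 = e"
  by (simp add: U_iter_def)

lemma U_iter_Suc: "U_iter z (Suc n) = U z (U_iter z n)"
  by (simp add: U_iter_def)

definition iterates_below_y :: "real \<Rightarrow> bool" where
  "iterates_below_y z \<longleftrightarrow> (\<forall>n. e \<le> U_iter z n \<and> U_iter z n < y)"

lemma iterates_below_yI:
  assumes z: "e \<le> z" "z < y" and below: "\<And>s. e \<le> s \<Longrightarrow> s < y \<Longrightarrow> U z s < y"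
  shows "iterates_below_y z"
  unfolding iterates_below_y_def
proof
  fix n show "e \<le> U_iter z n \<and> U_iter z n < y"
  proof (induction n)
    case 0 then show ?case using z by (simp add: U_iter_0)
  next
    case (Suc n)
    have "U_iter z n \<le> U z (U_iter z n)" using U_ge_right[of z "U_iter z n"] Suc z y01 e0 by auto
    then show ?case using Suc below[of "U_iter z n"] by (simp add: U_iter_Suc)
  qed
qed

lemma orbit_Suc:
  assumes x: "0 \<le> x" "x \<le> 1" and z: "e \<le> z" "z \<le> 1" and it: "iterates_below_y z"
  shows "U x (U_iter z (Suc n)) = U (U x (U_iter z n)) z"
proof -
  have P: "e \<le> U_iter z n" "U_iter z n < y" using it by (auto simp: iterates_below_y_def)
  have "U x (U_iter z (Suc n)) = U x (U (U_iter z n) z)"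
    using U_commute[of z "U_iter z n"] P z y01 e0 by (simp add: U_iter_Suc)
  also have "\<dots> = U (U x (U_iter z n)) z" using U_assoc[of x "U_iter z n" z] P x z y01 e0 by simp
  finally show ?thesis .
qed

lemma orbit_in_gap:
  assumes x: "a < x" "x \<le> x2" and z: "e \<le> z" "z \<le> 1" and it: "iterates_below_y z"
  shows "a < U x (U_iter z n) \<and> U x (U_iter z n) \<le> b"
proof (induction n)
  case 0 then show ?case using U_neutral_right[of x] x x_bounds a0 by (simp add: U_iter_0)
next
  case (Suc n)
  let ?v = "U x (U_iter z n)"
  have step: "U x (U_iter z (Suc n)) = U ?v z" using orbit_Suc[of x z n] x x_bounds a0 z it by auto
  have "?v \<le> U ?v z" using U_ge_left[of z ?v] Suc z a0 be e0 e1 by auto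
  moreover have lt: "U ?v z < e"
  proof -
    have "e \<le> U_iter z (Suc n)" "U_iter z (Suc n) < y" using it by (auto simp: iterates_below_y_def)
    then show ?thesis using U_lt_e_below_y[of x "U_iter z (Suc n)"] step x a0 e0 by simp
  qed
  moreover have "U ?v z \<le> b"
  proof (rule ccontr)
    assume "\<not> U ?v z \<le> b"
    then show False using U_eq_b_of_ge_b[of ?v z] lt Suc z a0 by auto
  qed
  ultimately show ?case using Suc step by auto
qed

lemma bdd_above_orbit:
  assumes "a < x" "x \<le> x2" "e \<le> z" "z \<le> 1" "iterates_below_y z"
  shows "bdd_above (range (\<lambda>n. U x (U_iter z n)))"
  by (rule bdd_aboveI2[where M = b]) (use orbit_in_gap[OF assms] in blast)

text \<open>A limit l < x2 of the orbit would satisfy l < U l z since z moves the gap, yet the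
  orbit climbs arbitrarily close to l and U z is continuous and onto below e.\<close>
lemma x2_le_Sup_orbit:
  assumes x: "a < x" "x \<le> x2" and z: "e \<le> z" "z < y" and it: "iterates_below_y z"
    and between: "gap_between z"
  shows "x2 \<le> Sup (range (\<lambda>n. U x (U_iter z n)))" (is "_ \<le> ?l")
proof (rule ccontr)
  assume "\<not> x2 \<le> ?l"
  then have lx: "?l < x2" by auto
  have z1: "z \<le> 1" using z y01 by auto
  have bdd: "bdd_above (range (\<lambda>n. U x (U_iter z n)))" using bdd_above_orbit x z1 z it by auto
  have "U x (U_iter z 0) \<le> ?l" by (rule cSup_upper[OF _ bdd]) simp
  then have la: "a < ?l" using U_neutral_right[of x] x x_bounds a0 by (simp add: U_iter_0)
  have lmm: "?l < U ?l z" using between la lx x_bounds unfolding gap_between_def by auto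
  have lee: "U ?l z < e" using U_lt_e_below_y[of ?l z] la lx z a0 e0 by auto
  have l01: "0 \<le> ?l" "?l \<le> 1" using la lx x_bounds a0 by auto
  have zl: "U z ?l = U ?l z" using U_commute[of z ?l] l01 z z1 e0 by auto
  obtain u where u: "0 \<le> u" "u \<le> 1" "U z u = (?l + U ?l z) / 2"
    using section_attains_below[of z ?l "(?l + U ?l z) / 2"] zl lee lmm l01 z z1 e0 by auto
  show False
  proof (cases "u < ?l")
    case True
    then obtain n where n: "u < U x (U_iter z n)" using less_cSup_iff[OF _ bdd] by auto
    have xn: "a < U x (U_iter z n)" "U x (U_iter z n) \<le> b" using orbit_in_gap[OF x z(1) z1 it] by auto
    have "U z u \<le> U z (U x (U_iter z n))" using U_mono_right[of z u "U x (U_iter z n)"] n u xn z z1 a0 be e0 by auto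
    also have "\<dots> = U x (U_iter z (Suc n))"
      using orbit_Suc[of x z n] U_commute[of z "U x (U_iter z n)"] xn x x_bounds z z1 it a0 be e0 e1 by auto
    also have "\<dots> \<le> ?l" using cSup_upper[OF _ bdd] by auto
    finally show False using u lmm by auto
  next
    case False
    then have "U z ?l \<le> U z u" using U_mono_right[of z ?l u] u l01 z z1 e0 by auto
    then show False using u zl lmm by auto
  qed
qed

text \<open>If all iterates of z stayed below y, the orbits U x (U_iter z n) for x in (a, x2] would
  converge to limits in [x2, b]; dividing the limit of the orbit of x2 down to a point c
  in (a, x2) by some t0 gives an orbit whose limit is at most c.\<close>
lemma exists_reaching_y:
  assumes z: "e \<le> z" "z < y" and between: "gap_between z"
  shows "\<exists>s. e \<le> s \<and> s < y \<and> y \<le> U z s"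
proof (rule ccontr)
  assume "\<not> ?thesis"
  then have it: "iterates_below_y z" using iterates_below_yI[OF z] by force
  have z1: "z \<le> 1" and y1: "y \<le> 1" using z y01 by auto
  have P: "e \<le> U_iter z n" "U_iter z n < y" for n using it by (auto simp: iterates_below_y_def)
  define X where "X = (\<lambda>x n. U x (U_iter z n))"
  define l2 where "l2 = Sup (range (X x2))"
  have bdd: "bdd_above (range (X x2))" using bdd_above_orbit[of x2 z] x_bounds z z1 it by (simp add: X_def)
  have Xab: "a < X x2 n" "X x2 n \<le> b" for n using orbit_in_gap[of x2 z n] x_bounds z z1 it by (auto simp: X_def)
  have l2r: "x2 \<le> l2" "l2 \<le> b"
    using x2_le_Sup_orbit[of x2 z] x_bounds z it between Xab by (auto simp: l2_def X_def intro: cSup_least)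
  define c where "c = (a + x2) / 2"
  have c: "a < c" "c < x2" using x_bounds by (auto simp: c_def)
  have "\<exists>t. a \<le> t \<and> t \<le> b \<and> U t l2 = c"
    by (rule IVT') (use U_a_absorbs[of l2] U_b_neutral[of l2] U_commute[of a l2] U_commute[of b l2] l2r c
        x_bounds a0 ab be e0 e1 continuous_on_gap_left[of l2] in auto)
  then obtain t0 where t0: "a \<le> t0" "t0 \<le> b" "U t0 l2 = c" by auto
  have t01: "0 \<le> t0" "t0 \<le> 1" using t0 a0 be e1 by auto
  have Xt: "X (U x2 t0) n = U t0 (X x2 n)" for n
    using U_left_commute[of x2 t0 "U_iter z n"] P[of n] t01 x_bounds y1 e0 by (auto simp: X_def)
  have ux: "a \<le> U x2 t0" using U_mono[of a x2 a t0] ia t0 x_bounds a0 be e1 by auto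
  show False
  proof (cases "a < U x2 t0")
    case True
    have "U t0 (X x2 n) \<le> c" for n
      using U_mono_right[of t0 "X x2 n" l2] cSup_upper[OF _ bdd] Xab[of n] t0 t01 l2r a0 be e1
      unfolding l2_def by auto
    then have "Sup (range (X (U x2 t0))) \<le> c" using Xt by (auto intro: cSup_least)
    moreover have "x2 \<le> Sup (range (X (U x2 t0)))"
      using x2_le_Sup_orbit[of "U x2 t0" z] True U_le_left[of t0 x2] t0 t01 x_bounds be z it between
      by (auto simp: X_def)
    ultimately show False using c by auto
  next
    case False
    then have ua: "U x2 t0 = a" using ux by auto
    have "U t0 (X x2 n) = a" for n
    proof -
      have "U a (U_iter z n) = a \<or> U a (U_iter z n) = U_iter z n"
        using idempotent_internal[of a "U_iter z n"] ia a0 ab be P[of n] y1 by auto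
      moreover have "U a (U_iter z n) < e" using U_lt_e_below_y[of a "U_iter z n"] a0 x_bounds P[of n] e0 by auto
      ultimately show ?thesis using P[of n] Xt[of n] ua by (auto simp: X_def)
    qed
    moreover have "continuous (at l2 within {0..e}) (U t0)"
      using continuous_on_tnorm_right[of t0] t0 t01 be l2r x_bounds
        continuous_on_eq_continuous_within[of "{0..e}" "U t0"] by auto
    moreover have "X x2 n \<in> {0..e}" for n using Xab[of n] a0 be by auto
    ultimately have "U t0 l2 = a" using continuous_within_Sup_range_const[of "X x2" _ "U t0" a] bdd
      unfolding l2_def by blast
    then show False using t0 c by auto
  qed
qed

lemma x2_lt_U_x1_if_absorbed_idempotent_y:
  assumes iy: "U y y = y" and tz: "gap_absorbed y" and z: "e \<le> z'" "z' < y" and m: "gap_between z'"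
  shows "x2 < U x1 z'"
proof -
  obtain s where s: "e \<le> s" "s < y" "y \<le> U z' s" using exists_reaching_y[OF z m] by blast
  have y1: "y \<le> 1" using y01 by auto
  have "U z' s \<le> U y y" using U_mono[of z' y s y] z s y1 e0 e1 by auto
  then have zs: "U z' s = y" using s iy by auto
  define v where "v = U x1 z'"
  have "U v s = U x1 (U z' s)" using U_assoc[of x1 z' s] z s x_bounds y1 e0 e1 by (auto simp: v_def)
  then have vs: "U v s = y" using zs tz x_bounds unfolding gap_absorbed_def by auto
  show ?thesis
  proof (rule ccontr)
    assume "\<not> x2 < U x1 z'"
    then have vx: "v \<le> x2" by (simp add: v_def)
    have v0: "0 \<le> v" using U_in_unit[of x1 z'] z x_bounds y1 e0 e1 by (auto simp: v_def)
    have "U v s < e" using U_lt_e_below_y[of v s] vx v0 s e0 e1 by auto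
    then show False using vs e_le_y by auto
  qed
qed

lemma gap_cut:
  assumes zr: "y < z" "z \<le> 1" and u0: "a < u0" "u0 < b" "U u0 z < e"
  obtains \<tau> where "a < \<tau>" "\<tau> \<le> x1" "\<And>u. a \<le> u \<Longrightarrow> u < \<tau> \<Longrightarrow> U u z < e"
    "\<And>u. \<tau> < u \<Longrightarrow> u < b \<Longrightarrow> e \<le> U u z"
proof -
  define D where "D = {u. a < u \<and> u < b \<and> U u z < e}"
  have u0D: "u0 \<in> D" using u0 by (auto simp: D_def)
  have bdd: "bdd_above D" unfolding bdd_above_def D_def by (rule exI[of _ b]) auto
  define \<tau> where "\<tau> = Sup D"
  have Dx1: "\<And>u. u \<in> D \<Longrightarrow> u < x1"
  proof (rule ccontr)
    fix u assume u: "u \<in> D" "\<not> u < x1"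
    then have "U x1 z \<le> U u z" using U_mono_left[of x1 u z] zr x_bounds be e0 e1 e_le_y by (auto simp: D_def)
    moreover have "e < U x1 z" using U_gt_e_above_y[of x1 z] zr x_bounds by auto
    ultimately show False using u by (auto simp: D_def)
  qed
  have tx1: "\<tau> \<le> x1" unfolding \<tau>_def
  proof (rule cSup_least)
    show "D \<noteq> {}" using u0D by auto
    fix u assume "u \<in> D" then show "u \<le> x1" using Dx1 by force
  qed
  have ta: "a < \<tau>" using cSup_upper[OF u0D bdd] u0 by (auto simp: \<tau>_def)
  have tb: "\<tau> < b" using tx1 x_bounds by auto
  have ze: "e \<le> z" using zr e_le_y by auto
  have below: "\<And>u. a \<le> u \<Longrightarrow> u < \<tau> \<Longrightarrow> U u z < e"
  proof -
    fix u assume u: "a \<le> u" "u < \<tau>"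
    then obtain d where d: "d \<in> D" "u < d" using less_cSup_iff[of D u] u0D bdd by (auto simp: \<tau>_def)
    have "U u z \<le> U d z" using U_mono_left[of u d z] u d a0 zr ze be by (auto simp: D_def)
    then show "U u z < e" using d by (auto simp: D_def)
  qed
  have above: "\<And>u. \<tau> < u \<Longrightarrow> u < b \<Longrightarrow> e \<le> U u z"
  proof (rule ccontr)
    fix u assume u: "\<tau> < u" "u < b" "\<not> e \<le> U u z"
    then have "u \<in> D" using ta by (auto simp: D_def)
    then show False using cSup_upper[OF _ bdd, of u] u by (auto simp: \<tau>_def)
  qed
  show thesis using that[of \<tau>] ta tx1 below above by blast
qed

lemma U_eq_y_of_straddle:
  assumes zr: "y < z" "z \<le> 1"
    and below: "\<And>u. a \<le> u \<Longrightarrow> u < \<tau> \<Longrightarrow> U u z < e"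
    and above: "\<And>u. \<tau> < u \<Longrightarrow> u < b \<Longrightarrow> e \<le> U u z"
    and hab: "0 \<le> h" "h \<le> 1"
    and u1: "U x1 h < \<tau>" and u1a: "a \<le> U x1 h" and u2: "\<tau> < U x2 h" and u2b: "U x2 h < b"
  shows "U h z = y"
proof -
  have ze: "e \<le> z" using zr e_le_y by auto
  have hz1: "0 \<le> U h z" "U h z \<le> 1" using U_in_unit[of h z] hab zr ze e0 e1 by auto
  show "U h z = y"
  proof (rule ccontr)
    assume "U h z \<noteq> y"
    then consider "y < U h z" | "U h z < y" by linarith
    then show False
    proof cases
      case 1
      then have "e < U x1 (U h z)" using U_gt_e_above_y[of x1 "U h z"] hz1 x_bounds by auto
      moreover have "U x1 (U h z) = U (U x1 h) z" using U_assoc[of x1 h z] hab zr ze x_bounds e0 e1 by auto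
      moreover have "U (U x1 h) z < e" using below[of "U x1 h"] u1 u1a by auto
      ultimately show False by auto
    next
      case 2
      then have "U x2 (U h z) < e" using U_lt_e_below_y[of x2 "U h z"] hz1 x_bounds by auto
      moreover have "U x2 (U h z) = U (U x2 h) z" using U_assoc[of x2 h z] hab zr ze x_bounds e0 e1 by auto
      moreover have "e \<le> U (U x2 h) z" using above[of "U x2 h"] u2 u2b by auto
      ultimately show False by auto
    qed
  qed
qed

lemma U_eq_y_right_of_cut:
  assumes zr: "y < z" "z \<le> 1" and ta: "a < \<tau>" and tx1: "\<tau> \<le> x1"
    and below: "\<And>u. a \<le> u \<Longrightarrow> u < \<tau> \<Longrightarrow> U u z < e"
    and above: "\<And>u. \<tau> < u \<Longrightarrow> u < b \<Longrightarrow> e \<le> U u z"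
  obtains h0 d1 where "\<tau> < h0" "h0 < b" "d1 > 0"
    "\<And>h. h0 < h \<Longrightarrow> h < b \<Longrightarrow> dist h h0 < d1 \<Longrightarrow> U h z = y \<and> U x1 h < \<tau> \<and> \<tau> < U x2 h"
proof -
  have tb: "\<tau> < b" using tx1 x_bounds by auto
  have ze: "e \<le> z" using zr e_le_y by auto
  have gt: "U x2 \<tau> < \<tau>"
  proof -
    have "U \<tau> x2 \<le> \<tau>" using U_le_left[of x2 \<tau>] ta tb x_bounds a0 be e0 e1 by auto
    moreover have "U \<tau> x2 \<noteq> \<tau>" using gap_no_partial_unit[of \<tau> x2] ta tb x_bounds by auto
    moreover have "U \<tau> x2 = U x2 \<tau>" using U_commute[of \<tau> x2] ta tb x_bounds a0 be e0 e1 by auto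
    ultimately show ?thesis by auto
  qed
  have "\<exists>h. \<tau> \<le> h \<and> h \<le> b \<and> U x2 h = \<tau>"
    by (rule IVT') (use gt U_b_neutral[of x2] x_bounds x12 tx1 tb continuous_on_gap_right[of x2] ta in \<open>auto intro: continuous_on_subset\<close>)
  then obtain h0 where h0: "\<tau> \<le> h0" "h0 \<le> b" "U x2 h0 = \<tau>" by auto
  have h0t: "\<tau> < h0" using h0 gt by (cases "\<tau> = h0") auto
  have h0b: "h0 < b" using h0 U_b_neutral[of x2] x_bounds x12 tx1 by (cases "h0 = b") auto
  have x1h0: "U x1 h0 < \<tau>"
  proof -
    have "U h0 x1 < U h0 x2" using gap_strict_mono[of h0 x1 x2] h0 h0t h0b ta x_bounds U_commute[of h0 x2] a0 be e0 e1 by auto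
    then show ?thesis using U_commute[of h0 x1] U_commute[of h0 x2] h0 h0b ta x_bounds a0 be e0 e1 by auto
  qed
  have cont1: "continuous (at h0 within {a..b}) (U x1)"
    using continuous_on_gap_right[of x1] x_bounds h0 h0b ta continuous_on_eq_continuous_within[of "{a..b}" "U x1"] by auto
  obtain d1 where d1: "d1 > 0" "\<forall>h\<in>{a..b}. dist h h0 < d1 \<longrightarrow> dist (U x1 h) (U x1 h0) < \<tau> - U x1 h0"
  proof -
    have "\<tau> - U x1 h0 > 0" using x1h0 by auto
    then show ?thesis using cont1[unfolded continuous_within_eps_delta, rule_format, of "\<tau> - U x1 h0"] that by blast
  qed
  have hy: "\<And>h. h0 < h \<Longrightarrow> h < b \<Longrightarrow> dist h h0 < d1 \<Longrightarrow> U h z = y \<and> U x1 h < \<tau> \<and> \<tau> < U x2 h"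
  proof -
    fix h assume h: "h0 < h" "h < b" "dist h h0 < d1"
    have hab: "a \<le> h" "h \<le> b" "0 \<le> h" "h \<le> 1" using h h0t ta a0 be e0 e1 by auto
    have "dist (U x1 h) (U x1 h0) < \<tau> - U x1 h0" using d1 h hab by auto
    then have u1: "U x1 h < \<tau>" by (auto simp: dist_real_def)
    have u1a: "a \<le> U x1 h" using U_mono[of a x1 a h] ia x_bounds hab a0 by auto
    have u2: "\<tau> < U x2 h"
    proof -
      have "a < U x2 h" using U_mono_right[of x2 h0 h] h h0 h0t hab x_bounds ta a0 by auto
      then show ?thesis using gap_strict_mono[of x2 h0 h] h0 h x_bounds hab ta by auto
    qed
    have u2b: "U x2 h < b" using U_le_left[of h x2] hab x_bounds be e0 e1 by auto
    have "U h z = y"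
      using U_eq_y_of_straddle[OF zr below above] hab u1 u1a u2 u2b by auto
    then show "U h z = y \<and> U x1 h < \<tau> \<and> \<tau> < U x2 h" using u1 u2 by auto
  qed
  show thesis using that[of h0 d1] h0t h0b d1(1) hy by blast
qed

lemma gap_separating_point:
  assumes ta: "a < \<tau>" and hab: "a \<le> h1" "h1 < h2" "h2 < b"
    and p1: "U x1 h2 < \<tau>" and p2: "\<tau> < U x2 h2"
  obtains x4 where "a < x4" "x4 < b" "U x4 h1 < \<tau>" "\<tau> < U x4 h2"
proof -
  have "\<exists>x3. x1 \<le> x3 \<and> x3 \<le> x2 \<and> U x3 h2 = \<tau>"
    by (rule IVT') (use p1 p2 x12 continuous_on_gap_left[of h2] hab x_bounds a0 be in \<open>auto intro: continuous_on_subset\<close>)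
  then obtain x3 where x3: "x1 \<le> x3" "x3 \<le> x2" "U x3 h2 = \<tau>" by auto
  have x3x2: "x3 < x2" using x3 p2 by (cases "x3 = x2") auto
  have x3r: "a < x3" "x3 < b" using x3 x3x2 x_bounds by auto
  have q1: "U x3 h1 < \<tau>" using gap_strict_mono[of x3 h1 h2] x3r hab x3 ta by auto
  have cont3: "continuous (at x3 within {a..b}) (\<lambda>t. U t h1)"
    using continuous_on_gap_left[of h1] hab x3r ta be continuous_on_eq_continuous_within[of "{a..b}" "\<lambda>t. U t h1"] by auto
  obtain d2 where d2: "d2 > 0" "\<forall>t\<in>{a..b}. dist t x3 < d2 \<longrightarrow> dist (U t h1) (U x3 h1) < \<tau> - U x3 h1"
  proof -
    have "\<tau> - U x3 h1 > 0" using q1 by auto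
    then show ?thesis using cont3[unfolded continuous_within_eps_delta, rule_format, of "\<tau> - U x3 h1"] that by blast
  qed
  define m where "m = min d2 (x2 - x3)"
  have m: "0 < m" "m \<le> d2" "m \<le> x2 - x3" using d2 x3x2 by (auto simp: m_def)
  define x4 where "x4 = x3 + m / 2"
  have x4: "x3 < x4" "x4 < x2" "dist x4 x3 < d2" using m by (auto simp: x4_def dist_real_def)
  have x4r: "a < x4" "x4 < b" "0 \<le> x4" "x4 \<le> 1" using x4 x3r x_bounds a0 be e0 e1 by auto
  have q3: "U x4 h1 < \<tau>"
  proof -
    have "dist (U x4 h1) (U x3 h1) < \<tau> - U x3 h1" using d2 x4 x4r by auto
    then show ?thesis by (auto simp: dist_real_def)
  qed
  have q4: "\<tau> < U x4 h2"
  proof -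
    have "U h2 x3 = \<tau>" using U_commute[of h2 x3] x3 hab x3r a0 be e0 e1 by auto
    moreover have "U h2 x4 \<ge> U h2 x3" using U_mono_right[of h2 x3 x4] x4 x4r hab x3r a0 be e0 e1 by auto
    ultimately have "a < U h2 x4" using ta by auto
    then have "U h2 x3 < U h2 x4" using gap_strict_mono[of h2 x3 x4] hab x3r x4 x4r by auto
    then show ?thesis using U_commute[of h2 x3] U_commute[of h2 x4] x3 hab x3r x4r a0 be e0 e1 by auto
  qed
  show thesis using that x4r q3 q4 by blast
qed

text \<open>Otherwise the cut \<tau> between the x with U x z < e and those with U x z \<ge> e yields
  h1 < h2 with U h1 z = U h2 z = y and an x4 with U x4 h1 < \<tau> < U x4 h2, although
  U (U x4 h1) z = U (U x4 h2) z.\<close>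
lemma e_le_U_above_y:
  assumes zr: "y < z" "z \<le> 1" and u0: "a < u0" "u0 < b"
  shows "e \<le> U u0 z"
proof (rule ccontr)
  assume "\<not> e \<le> U u0 z"
  then obtain \<tau> where ta: "a < \<tau>" and tx1: "\<tau> \<le> x1"
    and below: "\<And>u. a \<le> u \<Longrightarrow> u < \<tau> \<Longrightarrow> U u z < e"
    and above: "\<And>u. \<tau> < u \<Longrightarrow> u < b \<Longrightarrow> e \<le> U u z"
    using gap_cut[OF zr u0] by auto
  obtain h0 d1 where h0t: "\<tau> < h0" and h0b: "h0 < b" and d1: "d1 > 0"
    and hy: "\<And>h. h0 < h \<Longrightarrow> h < b \<Longrightarrow> dist h h0 < d1 \<Longrightarrow> U h z = y \<and> U x1 h < \<tau> \<and> \<tau> < U x2 h"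
    using U_eq_y_right_of_cut[OF zr ta tx1 below above] by blast
  have ze: "e \<le> z" using zr e_le_y by auto
  define r where "r = min d1 (b - h0) / 3"
  have r: "r > 0" using d1 h0b by (auto simp: r_def)
  define h1 where "h1 = h0 + r"
  define h2 where "h2 = h0 + 2 * r"
  have rr: "3 * r \<le> d1" "3 * r \<le> b - h0" unfolding r_def by (auto simp: min_def)
  have h12: "h0 < h1" "h1 < h2" "h2 < b" "dist h1 h0 < d1" "dist h2 h0 < d1"
    using r rr d1 h0b by (auto simp: h1_def h2_def dist_real_def)
  have h1y: "U h1 z = y" using hy[of h1] h12 by auto
  have h2y: "U h2 z = y" using hy[of h2] h12 by auto
  have hab: "a \<le> h1" "h1 \<le> b" "a \<le> h2" "h2 \<le> b" using h12 h0t ta by auto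
  have eqv: "\<And>x'. 0 \<le> x' \<Longrightarrow> x' \<le> 1 \<Longrightarrow> U (U x' h1) z = U (U x' h2) z"
  proof -
    fix x' :: real assume x': "0 \<le> x'" "x' \<le> 1"
    have "U (U x' h1) z = U x' (U h1 z)" using U_assoc[of x' h1 z] x' hab zr ze a0 be e0 e1 by auto
    moreover have "U (U x' h2) z = U x' (U h2 z)" using U_assoc[of x' h2 z] x' hab zr ze a0 be e0 e1 by auto
    ultimately show "U (U x' h1) z = U (U x' h2) z" using h1y h2y by simp
  qed
  have p1: "U x1 h2 < \<tau>" and p2: "\<tau> < U x2 h2" using hy[of h2] h12 by auto
  obtain x4 where x4r: "a < x4" "x4 < b" and q3: "U x4 h1 < \<tau>" and q4: "\<tau> < U x4 h2"
    using gap_separating_point[OF ta _ _ _ p1 p2] hab h12 by blast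
  have x4r': "0 \<le> x4" "x4 \<le> 1" using x4r a0 be e1 by auto
  have q3a: "a \<le> U x4 h1" using U_mono[of a x4 a h1] ia x4r x4r' hab a0 be e0 e1 by auto
  have q4b: "U x4 h2 < b" using U_le_left[of h2 x4] x4r x4r' hab be e0 e1 a0 by auto
  have "U (U x4 h1) z < e" using below[of "U x4 h1"] q3 q3a by auto
  moreover have "e \<le> U (U x4 h2) z" using above[of "U x4 h2"] q4 q4b by auto
  moreover have "U (U x4 h1) z = U (U x4 h2) z" using eqv[of x4] x4r' by auto
  ultimately show False by auto
qed

lemma not_between_above_idempotent_y:
  assumes iy: "U y y = y" and zr: "y < z" "z \<le> 1"
  shows "\<not> gap_between z"
proof
  assume mz: "gap_between z"
  have y1: "y \<le> 1" using y01 by auto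
  define v0 where "v0 = U gap_mid z"
  have v0z: "v0 < z" using mz gap_mid unfolding gap_between_def v0_def by auto
  define s0 where "s0 = (max v0 y + z) / 2"
  have s0: "v0 < s0" "y < s0" "s0 < z" using v0z zr by (auto simp: s0_def)
  have s0e: "e \<le> s0" "s0 \<le> 1" using s0 e_le_y zr by auto
  have ys0: "U y s0 = s0" using idempotent_max_above[of y s0] iy e_le_y y1 s0 s0e by auto
  have cont: "continuous (at y within {e..1}) (\<lambda>u. U u s0)"
    using continuous_on_tconorm_left[of s0] s0e e_le_y y1 continuous_on_eq_continuous_within[of "{e..1}" "\<lambda>u. U u s0"] by auto
  obtain d where d: "d > 0" "\<forall>u\<in>{e..1}. dist u y < d \<longrightarrow> dist (U u s0) (U y s0) < z - s0"
  proof -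
    have "z - s0 > 0" using s0 by auto
    then show ?thesis using cont[unfolded continuous_within_eps_delta, rule_format, of "z - s0"] that by blast
  qed
  define uc where "uc = min (y + d / 2) ((y + z) / 2)"
  have uc: "y < uc" "uc < z" "dist uc y < d"
  proof -
    have "uc \<le> (y + z) / 2" "uc \<le> y + d / 2" unfolding uc_def by (rule min.cobounded2, rule min.cobounded1)
    moreover have "y < uc" using d zr by (auto simp: uc_def)
    ultimately show "y < uc" "uc < z" "dist uc y < d" using d zr by (auto simp: dist_real_def)
  qed
  have uce: "e \<le> uc" "uc \<le> 1" using uc e_le_y zr by auto
  have "dist (U uc s0) (U y s0) < z - s0" using d uc uce by auto
  then have ucs: "U uc s0 < z" using ys0 by (auto simp: dist_real_def)
  have "\<exists>\<sigma>. s0 \<le> \<sigma> \<and> \<sigma> \<le> 1 \<and> U uc \<sigma> = z"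
    by (rule IVT') (use ucs U_one[of uc] uce zr s0e continuous_on_tconorm_right[of uc] in \<open>auto intro: continuous_on_subset\<close>)
  then obtain \<sigma> where sg: "s0 \<le> \<sigma>" "\<sigma> \<le> 1" "U uc \<sigma> = z" by auto
  have sgs: "s0 < \<sigma>" using sg ucs by (cases "s0 = \<sigma>") auto
  have xe: "e \<le> U gap_mid uc" using e_le_U_above_y[of uc gap_mid] uc uce gap_mid by auto
  have xe1: "U gap_mid uc \<le> 1" using U_in_unit[of gap_mid uc] gap_mid uce a0 be e0 e1 by auto
  have "v0 = U (U gap_mid uc) \<sigma>" using U_assoc[of gap_mid uc \<sigma>] sg uce gap_mid a0 be s0e e0 e1 by (auto simp: v0_def)
  moreover have "\<sigma> \<le> U (U gap_mid uc) \<sigma>" using U_ge_right[of "U gap_mid uc" \<sigma>] xe xe1 sg s0e e0 e1 by auto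
  ultimately show False using sgs s0 by auto
qed

lemma not_gap_between:
  assumes z: "e \<le> z" "z \<le> 1"
  shows "\<not> gap_between z"
proof
  assume mz: "gap_between z"
  have y1: "y \<le> 1" using y01 by auto
  show False
  proof (cases "U y y = y")
    case False
    obtain z0 where "e \<le> z0" "z0 < y" "gap_between z0"
      using ex_between_below_y_if_not_idempotent_y[OF False z mz] by blast
    then obtain z' where "e \<le> z'" "z' < y" "gap_between z'" "U x1 z' \<le> x2"
      using ex_between_below_y_le_x2 by blast
    then show False using x2_lt_U_x1_if_not_idempotent_y[OF False] by force
  next
    case iy: True
    have "\<not> gap_between y" using idempotent_not_gap_between[of y] iy e_le_y y1 by auto
    then have y_cases: "gap_fixed y \<or> gap_absorbed y" using gap_trichotomy[of y] e_le_y y1 by auto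
    consider "z < y" | "z = y" | "y < z" by linarith
    then show False
    proof cases
      case 1
      obtain z' where "e \<le> z'" "z' < y" "gap_between z'" "U x1 z' \<le> x2"
        using ex_between_below_y_le_x2[OF z(1) 1 mz] by blast
      then show False using y_cases not_between_below_y_if_fixed_idempotent_y[OF iy]
          x2_lt_U_x1_if_absorbed_idempotent_y[OF iy] by force
    next
      case 2 then show False using \<open>\<not> gap_between y\<close> mz by auto
    next
      case 3 then show False using not_between_above_idempotent_y[OF iy 3 z(2)] mz by auto
    qed
  qed
qed

lemma gap_pseudo_internal: "\<forall>x\<in>{a..b}. \<forall>z\<in>{0..1}. ((x \<le> e \<and> e \<le> z) \<or> (e \<le> x \<and> z \<le> e)) \<longrightarrow> U x z \<in> {x, z}"
proof (intro ballI impI)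
  fix x z assume x: "x \<in> {a..b}" and z: "z \<in> {0..1}" and c: "(x \<le> e \<and> e \<le> z) \<or> (e \<le> x \<and> z \<le> e)"
  show "U x z \<in> {x, z}"
  proof (cases "e \<le> x")
    case True
    then have "x = e" using x be by auto
    then show ?thesis using U_neutral_left[of z] z by auto
  next
    case False
    then have ez: "e \<le> z" using c by auto
    show ?thesis
    proof (cases "x = a \<or> x = b")
      case True
      then show ?thesis using idempotent_internal[of x z] ia ib a0 ab be ez z by auto
    next
      case False
      then have xr: "a < x" "x < b" using x by auto
      have "gap_fixed z \<or> gap_absorbed z" using gap_trichotomy[of z] not_gap_between[of z] ez z by auto
      then show ?thesis using xr unfolding gap_fixed_def gap_absorbed_def by auto
    qed
  qed
qed

end

lemma gap_pseudo_internal_below_e: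
  fixes U :: "real \<Rightarrow> real \<Rightarrow> real"
  assumes "in_class_U U e" and "0 < e" and "e < 1"
    and "idempotent_elem U a" and "idempotent_elem U b" and "a < b" and "b \<le> e"
    and "\<forall>t\<in>{a<..<b}. \<not> idempotent_elem U t"
    and "y \<in> {0..1}" and "x1 \<in> {a<..<b}" and "x2 \<in> {a<..<b}" and "x1 < x2"
    and "\<not> continuous (at y within {0..1}) (U x1)"
    and "\<not> continuous (at y within {0..1}) (U x2)"
  shows "\<forall>x\<in>{a..b}. \<forall>z\<in>{0..1}.
           ((x \<le> e \<and> e \<le> z) \<or> (e \<le> x \<and> z \<le> e)) \<longrightarrow> U x z \<in> {x, z}"
proof -
  interpret gap_below_e U e a b x1 x2 y
    by unfold_locales (use assms in \<open>auto simp: idempotent_elem_def\<close>)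
  show ?thesis by (rule gap_pseudo_internal)
qed

subsection \<open>Duality\<close>

text \<open>Reflection in 1/2 exchanges the underlying t-norm and t-conorm, so it turns a gap above
  e into a gap below 1 - e.\<close>
definition dual_uninorm :: "(real \<Rightarrow> real \<Rightarrow> real) \<Rightarrow> real \<Rightarrow> real \<Rightarrow> real" where
  "dual_uninorm U x z = 1 - U (1 - x) (1 - z)"

lemma uninorm_dual:
  assumes "uninorm U e"
  shows "uninorm (dual_uninorm U) (1 - e)"
  unfolding uninorm_def dual_uninorm_def
proof (intro conjI ballI impI)
  note U = assms[unfolded uninorm_def]
  show "1 - e \<in> {0..1}" using U by auto
  fix x y z :: real assume x: "x \<in> {0..1}" and y: "y \<in> {0..1}"
  have x': "1 - x \<in> {0..1}" and y': "1 - y \<in> {0..1}" using x y by auto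
  show "1 - U (1 - x) (1 - y) \<in> {0..1}" using U x' y' by auto
  show "1 - U (1 - x) (1 - y) = 1 - U (1 - y) (1 - x)" using U x' y' by auto
  show "1 - U (1 - (1 - e)) (1 - x) = x" using U x' by auto
  assume z: "z \<in> {0..1}"
  then have z': "1 - z \<in> {0..1}" by auto
  show "1 - U (1 - (1 - U (1 - x) (1 - y))) (1 - z) = 1 - U (1 - x) (1 - (1 - U (1 - y) (1 - z)))"
    using U x' y' z' by auto
  assume "y \<le> z"
  then show "1 - U (1 - x) (1 - y) \<le> 1 - U (1 - x) (1 - z)" using U x' y' z' by auto
qed

lemma underlying_tnorm_dual:
  "e < 1 \<Longrightarrow> underlying_tnorm (dual_uninorm U) (1 - e) x y = 1 - underlying_tconorm U e (1 - x) (1 - y)"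
  by (simp add: underlying_tnorm_def underlying_tconorm_def dual_uninorm_def field_simps)

lemma underlying_tconorm_dual:
  "0 < e \<Longrightarrow> underlying_tconorm (dual_uninorm U) (1 - e) x y = 1 - underlying_tnorm U e (1 - x) (1 - y)"
  by (simp add: underlying_tnorm_def underlying_tconorm_def dual_uninorm_def field_simps)

lemma continuous_on_unit_square_reflect:
  fixes f :: "real \<Rightarrow> real \<Rightarrow> real"
  assumes "continuous_on ({0..1} \<times> {0..1}) (\<lambda>(x, y). f x y)"
  shows "continuous_on ({0..1} \<times> {0..1}) (\<lambda>(x, y). 1 - f (1 - x) (1 - y))"
proof -
  have "continuous_on ({0..1} \<times> {0..1}) (\<lambda>p. 1 - (\<lambda>(x, y). f x y) (1 - fst p, 1 - snd p))"
    by (intro continuous_intros continuous_on_compose2[OF assms]) auto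
  then show ?thesis by (simp add: case_prod_beta')
qed

lemma in_class_U_dual:
  assumes "in_class_U U e" "0 < e" "e < 1"
  shows "in_class_U (dual_uninorm U) (1 - e)"
  using assms uninorm_dual continuous_on_unit_square_reflect
  by (simp add: in_class_U_def underlying_tnorm_dual underlying_tconorm_dual)

lemma idempotent_elem_dual: "idempotent_elem (dual_uninorm U) (1 - t) \<longleftrightarrow> idempotent_elem U t"
  by (auto simp: idempotent_elem_def dual_uninorm_def)

lemma continuous_within_reflect:
  fixes f :: "real \<Rightarrow> real"
  assumes "continuous (at (1 - y) within {0..1}) (\<lambda>z. 1 - f (1 - z))"
  shows "continuous (at y within {0..1}) f"
  unfolding continuous_within_eps_delta
proof (intro allI impI)
  fix \<epsilon> :: real assume "\<epsilon> > 0"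
  then obtain d where d: "d > 0" "\<forall>z\<in>{0..1}. dist z (1 - y) < d \<longrightarrow> dist (1 - f (1 - z)) (1 - f y) < \<epsilon>"
    using assms[unfolded continuous_within_eps_delta] by fastforce
  show "\<exists>\<delta>>0. \<forall>z\<in>{0..1}. dist z y < \<delta> \<longrightarrow> dist (f z) (f y) < \<epsilon>"
  proof (intro exI[of _ d] conjI ballI impI)
    fix z :: real assume "z \<in> {0..1}" "dist z y < d"
    then have "dist (1 - f (1 - (1 - z))) (1 - f y) < \<epsilon>"
      using d(2)[rule_format, of "1 - z"] by (auto simp: dist_real_def)
    then show "dist (f z) (f y) < \<epsilon>" by (auto simp: dist_real_def)
  qed (use d in auto)
qed

lemma discontinuous_dual_section:
  assumes "\<not> continuous (at y within {0..1}) (U x)"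
  shows "\<not> continuous (at (1 - y) within {0..1}) (dual_uninorm U (1 - x))"
proof -
  have "dual_uninorm U (1 - x) = (\<lambda>z. 1 - U x (1 - z))" by (simp add: dual_uninorm_def fun_eq_iff)
  with assms continuous_within_reflect[of y "U x"] show ?thesis by metis
qed

lemma gap_pseudo_internal_above_e:
  fixes U :: "real \<Rightarrow> real \<Rightarrow> real"
  assumes "in_class_U U e" and "0 < e" and "e < 1"
    and "idempotent_elem U a" and "idempotent_elem U b" and "a < b" and "e \<le> a"
    and "\<forall>t\<in>{a<..<b}. \<not> idempotent_elem U t"
    and "y \<in> {0..1}" and "x1 \<in> {a<..<b}" and "x2 \<in> {a<..<b}" and "x1 < x2"
    and "\<not> continuous (at y within {0..1}) (U x1)"
    and "\<not> continuous (at y within {0..1}) (U x2)"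
  shows "\<forall>x\<in>{a..b}. \<forall>z\<in>{0..1}.
           ((x \<le> e \<and> e \<le> z) \<or> (e \<le> x \<and> z \<le> e)) \<longrightarrow> U x z \<in> {x, z}"
proof -
  have dual: "\<forall>x\<in>{1-b..1-a}. \<forall>z\<in>{0..1}. ((x \<le> 1 - e \<and> 1 - e \<le> z) \<or> (1 - e \<le> x \<and> z \<le> 1 - e))
      \<longrightarrow> dual_uninorm U x z \<in> {x, z}"
  proof (rule gap_pseudo_internal_below_e[of "dual_uninorm U" "1 - e" "1 - b" "1 - a" "1 - y" "1 - x2" "1 - x1"])
    show "\<forall>t\<in>{1 - b<..<1 - a}. \<not> idempotent_elem (dual_uninorm U) t"
    proof
      fix t assume "t \<in> {1 - b<..<1 - a}"
      then have "1 - t \<in> {a<..<b}" by auto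
      then show "\<not> idempotent_elem (dual_uninorm U) t" using assms(8) idempotent_elem_dual[of U "1 - t"] by simp
    qed
  qed (use assms in_class_U_dual idempotent_elem_dual[of U] discontinuous_dual_section in auto)
  show ?thesis
  proof (intro ballI impI)
    fix x z assume "x \<in> {a..b}" "z \<in> {0..1}" "(x \<le> e \<and> e \<le> z) \<or> (e \<le> x \<and> z \<le> e)"
    then have "dual_uninorm U (1 - x) (1 - z) \<in> {1 - x, 1 - z}" using dual[rule_format, of "1 - x" "1 - z"] by auto
    then show "U x z \<in> {x, z}" by (auto simp: dual_uninorm_def)
  qed
qed

theorem lemma10:
  fixes U :: "real \<Rightarrow> real \<Rightarrow> real" and e a b :: real
  assumes "in_class_U U e" and "0 < e" and "e < 1"
    and "idempotent_elem U a" and "idempotent_elem U b" and "a < b"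
    and "\<forall>t\<in>{a<..<b}. \<not> idempotent_elem U t"
    and "y \<in> {0..1}" and "x1 \<in> {a<..<b}" and "x2 \<in> {a<..<b}" and "x1 < x2"
    and "\<not> continuous (at y within {0..1}) (U x1)"
    and "\<not> continuous (at y within {0..1}) (U x2)"
  shows "\<forall>x\<in>{a..b}. \<forall>z\<in>{0..1}.
           ((x \<le> e \<and> e \<le> z) \<or> (e \<le> x \<and> z \<le> e)) \<longrightarrow> U x z \<in> {x, z}"
proof -
  have "idempotent_elem U e" using assms(1-3) by (auto simp: in_class_U_def uninorm_def idempotent_elem_def)
  then have "b \<le> e \<or> e \<le> a" using assms(7) by force
  then show ?thesis
  proof
    assume "b \<le> e"
    then show ?thesis using gap_pseudo_internal_below_e[of U e a b] assms by blast
  next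
    assume "e \<le> a"
    then show ?thesis using gap_pseudo_internal_above_e[of U e a b] assms by blast
  qed
qed

end
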